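(* Let $j\geq1$ and $i\in\{0,1,\ldots,p-1\}$. Then there is an exact sequence of $E(2)_*$-comodules \[ 0\to\Sigma^{qpj}\underline{\ell}_j\otimes\underline{\ell}_i\to\underline{\ell}_{pj+i}\to Q^{pj-1}(A/\!/E(1))_*\to\bigoplus_{k=i+1}^{p-1}\Sigma^{\varphi(j,k)}\underline{\ell}_{j-1}\to0, \] where $\varphi(j,k)=q(p(j-1)+k)+|\overline{\tau}_2|=q(p(j-1)+k)+2p^2-1$. When $i=p-1$ the right-hand term is $0$, so that the sequence is a short exact sequence.
   Context: Let $p$ be an odd prime and $q=2(p-1)$. In the mod $p$ dual Steenrod algebra let $\zeta_n$ (degree $2(p^n-1)$) and $\overline{\tau}_n$ (degree $2p^n-1$) be the conjugates of Milnor's $\xi_n,\tau_n$. Let $(A/\!/E(1))_*=\mathbb{F}_p[\zeta_1,\zeta_2,\ldots]\otimes E(\overline{\tau}_2,\overline{\tau}_3,\ldots)$ and $(A/\!/E(2))_*=\mathbb{F}_p[\zeta_1,\ldots]\otimes E(\overline{\tau}_3,\ldots)$, comodule algebras over $E(2)_*=E(\overline{\tau}_0,\overline{\tau}_1,\overline{\tau}_2)$ (primitive generators) with coaction $\alpha(\zeta_k)=1\otimes\zeta_k$, $\alpha(\overline{\tau}_n)=1\otimes\overline{\tau}_n+\sum_{l=0}^{2}\overline{\tau}_l\otimes\zeta_{n-l}^{p^l}$ ($\zeta_0=1$). Weight: $\mathrm{wt}(\zeta_k)=\mathrm{wt}(\overline{\tau}_k)=p^k$, additive on products. $\underline{\ell}_j$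 denotes the $E(2)_*$-subcomodule of $(A/\!/E(1))_*$ spanned by monomials of weight $\le pj$ (so $\underline{\ell}_i=\mathbb{F}_p\{1,\zeta_1,\ldots,\zeta_1^i\}$ for $i<p$); tensor products carry the diagonal coaction. Every monomial of $(A/\!/E(1))_*$ is uniquely $m\overline{\tau}_2^\epsilon$ with $m$ a monomial in $(A/\!/E(2))_*$; $F^j(A/\!/E(1))_*$ is the span of those with $\mathrm{wt}(m)\ge pj$ (a filtration by $E(2)_*$-subcomodules), and $Q^{r}(A/\!/E(1))_*=(A/\!/E(1))_*/F^{r+1}(A/\!/E(1))_*$. *)

theory Defs
  imports Main "HOL-Computational_Algebra.Primes"
begin

text \<open>
A based graded comodule over 'k: a set of basis elements, a degree for each basis
element, and the coaction alpha(b) = sum_S tau_S (x) bco S b, where S ranges over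
subsets of {0,1,2}, tau_S is the product of the tau_l (l in S) in increasing order,
and bco S b is a finitely supported 'k-linear combination of basis elements.
\<close>

record ('b, 'k) bcomod =
  basis :: "'b set"
  bdeg  :: "'b \<Rightarrow> int"
  bco   :: "nat set \<Rightarrow> 'b \<Rightarrow> 'b \<Rightarrow> 'k"

definition vecs :: "('b, 'k::field) bcomod \<Rightarrow> ('b \<Rightarrow> 'k) set" where
  "vecs M = {v. (\<forall>b. v b \<noteq> 0 \<longrightarrow> b \<in> basis M) \<and> finite {b. v b \<noteq> 0}}"

definition homog :: "('b, 'k::field) bcomod \<Rightarrow> int \<Rightarrow> ('b \<Rightarrow> 'k) \<Rightarrow> bool" where
  "homog M d v \<longleftrightarrow> (\<forall>b. v b \<noteq> 0 \<longrightarrow> bdeg M b = d)"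

definition lin_co :: "('b, 'k::field) bcomod \<Rightarrow> nat set \<Rightarrow> ('b \<Rightarrow> 'k) \<Rightarrow> ('b \<Rightarrow> 'k)" where
  "lin_co M S v = (\<lambda>c. \<Sum>b\<in>{b. v b \<noteq> 0}. v b * bco M S b c)"

definition comod_map :: "('a, 'k::field) bcomod \<Rightarrow> ('b, 'k) bcomod
    \<Rightarrow> (('a \<Rightarrow> 'k) \<Rightarrow> ('b \<Rightarrow> 'k)) \<Rightarrow> bool" where
  "comod_map M N f \<longleftrightarrow>
     (\<forall>v\<in>vecs M. f v \<in> vecs N) \<and>
     (\<forall>v\<in>vecs M. \<forall>w\<in>vecs M. f (\<lambda>x. v x + w x) = (\<lambda>y. f v y + f w y)) \<and>
     (\<forall>v\<in>vecs M. \<forall>c. f (\<lambda>x. c * v x) = (\<lambda>y. c * f v y)) \<and>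
     (\<forall>v\<in>vecs M. \<forall>d. homog M d v \<longrightarrow> homog N d (f v)) \<and>
     (\<forall>S. S \<subseteq> {0,1,2} \<longrightarrow> (\<forall>v\<in>vecs M. f (lin_co M S v) = lin_co N S (f v)))"

definition exact4 ::
  "('a, 'k::field) bcomod \<Rightarrow> ('b, 'k) bcomod \<Rightarrow> ('c, 'k) bcomod \<Rightarrow> ('d, 'k) bcomod
   \<Rightarrow> (('a \<Rightarrow> 'k) \<Rightarrow> ('b \<Rightarrow> 'k)) \<Rightarrow> (('b \<Rightarrow> 'k) \<Rightarrow> ('c \<Rightarrow> 'k))
   \<Rightarrow> (('c \<Rightarrow> 'k) \<Rightarrow> ('d \<Rightarrow> 'k)) \<Rightarrow> bool" where
  "exact4 M1 M2 M3 M4 f g h \<longleftrightarrow>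
     comod_map M1 M2 f \<and> comod_map M2 M3 g \<and> comod_map M3 M4 h \<and>
     inj_on f (vecs M1) \<and>
     f ` vecs M1 = {w \<in> vecs M2. g w = (\<lambda>_. 0)} \<and>
     g ` vecs M2 = {w \<in> vecs M3. h w = (\<lambda>_. 0)} \<and>
     h ` vecs M3 = vecs M4"

definition susp :: "int \<Rightarrow> ('b, 'k) bcomod \<Rightarrow> ('b, 'k) bcomod" where
  "susp n M = M\<lparr>bdeg := (\<lambda>b. bdeg M b + n)\<rparr>"

text \<open>Degree of tau_S (|tau_l| = 2p^l - 1) and the sign tau_S1 tau_S2 = sign * tau_(S1 u S2).\<close>
definition taudeg :: "nat \<Rightarrow> nat set \<Rightarrow> int" where
  "taudeg p S = (\<Sum>l\<in>S. 2 * int p ^ l - 1)"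

definition osign :: "nat set \<Rightarrow> nat set \<Rightarrow> 'k::field" where
  "osign U V = (-1) ^ card {(u, v). u \<in> U \<and> v \<in> V \<and> v < u}"

text \<open>Tensor product with the diagonal coaction (Koszul sign convention):
  alpha(m (x) n) = sum (-1)^(|m_(0)| |n_(-1)|) m_(-1) n_(-1) (x) m_(0) (x) n_(0).\<close>
definition tensor :: "nat \<Rightarrow> ('a, 'k::field) bcomod \<Rightarrow> ('b, 'k) bcomod \<Rightarrow> ('a \<times> 'b, 'k) bcomod" where
  "tensor p M N =
     \<lparr> basis = basis M \<times> basis N,
       bdeg = (\<lambda>(a, b). bdeg M a + bdeg N b),
       bco = (\<lambda>S (a, b) (a', b').
          \<Sum>S1\<in>Pow S. osign S1 (S - S1)
             * (if even ((bdeg M a - taudeg p S1) * int (card (S - S1))) then 1 else -1)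
             * bco M S1 a a' * bco N (S - S1) b b') \<rparr>"

definition dsum_susp :: "nat set \<Rightarrow> (nat \<Rightarrow> int) \<Rightarrow> ('b, 'k::field) bcomod \<Rightarrow> (nat \<times> 'b, 'k) bcomod" where
  "dsum_susp K phi M =
     \<lparr> basis = K \<times> basis M,
       bdeg = (\<lambda>(k, b). phi k + bdeg M b),
       bco = (\<lambda>S (k, b) (k', c). if k = k' then bco M S b c else 0) \<rparr>"

text \<open>A monomial of (A//E(1))_* is (T, e): zeta_1^(e 1) zeta_2^(e 2) ... times
  taubar_(n_1) ... taubar_(n_r) with T = {n_1 < ... < n_r}, all n_i >= 2.\<close>
type_synonym amon = "nat set \<times> (nat \<Rightarrow> nat)"

definition A_basis :: "amon set" where
  "A_basis = {(T, e). finite T \<and> (\<forall>n\<in>T. 2 \<le> n) \<and> finite {k. e k \<noteq> 0} \<and> e 0 = 0}"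

definition A_deg :: "nat \<Rightarrow> amon \<Rightarrow> int" where
  "A_deg p m = (\<Sum>n\<in>fst m. 2 * int p ^ n - 1)
              + (\<Sum>k\<in>{k. snd m k \<noteq> 0}. int (snd m k) * 2 * (int p ^ k - 1))"

definition wt :: "nat \<Rightarrow> amon \<Rightarrow> nat" where
  "wt p m = (\<Sum>n\<in>fst m. p ^ n) + (\<Sum>k\<in>{k. snd m k \<noteq> 0}. snd m k * p ^ k)"

text \<open>Auxiliary graded-commutative algebra E(tau_0,tau_1,tau_2) (x) (A//E(1))_*,
  in which the coaction takes values. Monomials (U, e): U is the set of odd
  generators, coded tau_l |-> l (l <= 2) and taubar_n |-> n + 3, multiplied in
  increasing code order; e gives zeta exponents. Since all tau_l precede all
  taubar_n, a monomial with odd part S u (taubar codes of T) is tau_S (x) m.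
  Multiplication of monomials carries the Koszul sign of reordering odd generators;
  this is precisely the product (a (x) x)(b (x) y) = (-1)^(|x||b|) ab (x) xy.\<close>

type_synonym bmon = "nat set \<times> (nat \<Rightarrow> nat)"

definition bsingle :: "bmon \<Rightarrow> 'k::field \<Rightarrow> bmon \<Rightarrow> 'k" where
  "bsingle m c = (\<lambda>x. if x = m then c else 0)"

definition bmul :: "(bmon \<Rightarrow> 'k::field) \<Rightarrow> (bmon \<Rightarrow> 'k) \<Rightarrow> bmon \<Rightarrow> 'k" where
  "bmul f g = (\<lambda>m. \<Sum>(a, b)\<in>{(a, b). f a \<noteq> 0 \<and> g b \<noteq> 0 \<and> fst a \<inter> fst b = {}
                          \<and> (fst a \<union> fst b, \<lambda>k. snd a k + snd b k) = m}.
                   osign (fst a) (fst b) * f a * g b)"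

definition zexp :: "nat \<Rightarrow> nat \<Rightarrow> nat \<Rightarrow> nat" where
  "zexp k c = (if k = 0 then (\<lambda>_. 0) else (\<lambda>i. if i = k then c else 0))"

text \<open>alpha(taubar_n) = 1 (x) taubar_n + sum_(l=0..2) tau_l (x) zeta_(n-l)^(p^l), zeta_0 = 1.\<close>
definition alpha_tb :: "nat \<Rightarrow> nat \<Rightarrow> bmon \<Rightarrow> 'k::field" where
  "alpha_tb p n = (\<lambda>m. bsingle ({n + 3}, \<lambda>_. 0) 1 m
                       + (\<Sum>l\<in>{0,1,2::nat}. bsingle ({l}, zexp (n - l) (p ^ l)) 1 m))"

text \<open>alpha is multiplicative; alpha(zeta_k) = 1 (x) zeta_k.\<close>
definition alpha_A :: "nat \<Rightarrow> amon \<Rightarrow> bmon \<Rightarrow> 'k::field" where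
  "alpha_A p m = bmul (bsingle ({}, snd m) 1)
                      (foldr bmul (map (alpha_tb p) (sorted_list_of_set (fst m))) (bsingle ({}, \<lambda>_. 0) 1))"

definition A_co :: "nat \<Rightarrow> nat set \<Rightarrow> amon \<Rightarrow> amon \<Rightarrow> 'k::field" where
  "A_co p S m m' = alpha_A p m (S \<union> (\<lambda>n. n + 3) ` fst m', snd m')"

definition Acomod :: "nat \<Rightarrow> (amon, 'k::field) bcomod" where
  "Acomod p = \<lparr> basis = A_basis, bdeg = A_deg p, bco = A_co p \<rparr>"

definition ell :: "nat \<Rightarrow> nat \<Rightarrow> (amon, 'k::field) bcomod" where
  "ell p j = \<lparr> basis = {m \<in> A_basis. wt p m \<le> p * j}, bdeg = A_deg p, bco = A_co p \<rparr>"

text \<open>Q^r = (A//E(1))_* / F^(r+1), where F^(r+1) is spanned by the monomials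
  m taubar_2^eps with wt(m) >= p(r+1). The quotient is presented on the basis of
  the remaining monomials, with the projected coaction.\<close>
definition Qquot :: "nat \<Rightarrow> nat \<Rightarrow> (amon, 'k::field) bcomod" where
  "Qquot p r =
     \<lparr> basis = {m \<in> A_basis. wt p (fst m - {2}, snd m) < p * (r + 1)},
       bdeg = A_deg p,
       bco = (\<lambda>S m m'. if m' \<in> A_basis \<and> wt p (fst m' - {2}, snd m') < p * (r + 1)
                        then A_co p S m m' else 0) \<rparr>"

definition qq :: "nat \<Rightarrow> int" where
  "qq p = 2 * (int p - 1)"

definition phi :: "nat \<Rightarrow> nat \<Rightarrow> nat \<Rightarrow> int" where
  "phi p j k = qq p * (int p * (int j - 1) + int k) + 2 * int p ^ 2 - 1"

end

theory Submission
  imports Defs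
begin

text \<open>
  All four comodules have monomial bases and all three maps are induced by injections of these
  bases, so exactness reduces to two partitions of bases. Raising every index by one
  (zeta_k to zeta_(k+1), taubar_n to taubar_(n+1)) multiplies weights by p and commutes with the
  coaction, because the coaction of taubar_(n+1) is that of taubar_n with all indices raised.
  The monomials of ell_(pj+i) that vanish in Q^(pj-1) are exactly zeta_1^(k + pj - wt x) times
  the raising of x, for x in ell_j and k \<le> i (as i < p, they cannot contain taubar_2); this is the
  inclusion of Sigma^(qpj) ell_j (x) ell_i. The monomials of Q^(pj-1) outside ell_(pj+i) are
  exactly taubar_2 times such monomials with i < k < p and x in ell_(j-1); modulo terms that
  vanish in the quotient taubar_2 is primitive, so dividing by it, with a Koszul sign, is a
  comodule map onto the direct sum.
\<close>

section \<open>Comodule maps induced by maps of bases\<close>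

definition vec_push :: "('a \<Rightarrow> 'b) \<Rightarrow> 'a set \<Rightarrow> ('a \<Rightarrow> 'k::field) \<Rightarrow> ('b \<Rightarrow> 'k)" where
  "vec_push \<phi> B v = (\<lambda>c. if c \<in> \<phi> ` B then v (inv_into B \<phi> c) else 0)"

definition vec_pull :: "('b \<Rightarrow> 'a) \<Rightarrow> 'b set \<Rightarrow> ('b \<Rightarrow> 'k::field) \<Rightarrow> ('a \<Rightarrow> 'k) \<Rightarrow> ('b \<Rightarrow> 'k)" where
  "vec_pull \<psi> B \<sigma> v = (\<lambda>d. if d \<in> B then \<sigma> d * v (\<psi> d) else 0)"

abbreviation vec_restrict :: "'a set \<Rightarrow> ('a \<Rightarrow> 'k::field) \<Rightarrow> ('a \<Rightarrow> 'k)" where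
  "vec_restrict B \<equiv> vec_pull id B (\<lambda>_. 1)"

lemma vecsD:
  assumes "v \<in> vecs M"
  shows "finite {b. v b \<noteq> 0}" "{b. v b \<noteq> 0} \<subseteq> basis M" "\<And>b. b \<notin> basis M \<Longrightarrow> v b = 0"
  using assms by (auto simp: vecs_def)

lemma vec_push_apply:
  assumes "inj_on \<phi> B" "b \<in> B"
  shows "vec_push \<phi> B v (\<phi> b) = v b"
  using assms by (simp add: vec_push_def)

lemma support_vec_push:
  assumes "inj_on \<phi> B" "{b. v b \<noteq> 0} \<subseteq> B"
  shows "{c. vec_push \<phi> B v c \<noteq> 0} = \<phi> ` {b. v b \<noteq> 0}"
proof (intro equalityI subsetI)
  fix c assume "c \<in> {c. vec_push \<phi> B v c \<noteq> 0}"
  then have c: "c \<in> \<phi> ` B" "v (inv_into B \<phi> c) \<noteq> 0" by (auto simp: vec_push_def split: if_splits)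
  then have "c = \<phi> (inv_into B \<phi> c)" by (simp add: f_inv_into_f)
  then show "c \<in> \<phi> ` {b. v b \<noteq> 0}" using c(2) by blast
next
  fix c assume "c \<in> \<phi> ` {b. v b \<noteq> 0}"
  then obtain b where b: "v b \<noteq> 0" "c = \<phi> b" by blast
  then have "b \<in> B" using assms(2) by blast
  then have "vec_push \<phi> B v c = v b" unfolding b(2) by (rule vec_push_apply[OF assms(1)])
  then show "c \<in> {c. vec_push \<phi> B v c \<noteq> 0}" using b(1) by simp
qed

lemma vec_push_in_vecs:
  assumes "inj_on \<phi> (basis M)" "\<phi> ` basis M \<subseteq> basis N" "v \<in> vecs M"
  shows "vec_push \<phi> (basis M) v \<in> vecs N"
proof -
  have "{c. vec_push \<phi> (basis M) v c \<noteq> 0} = \<phi> ` {b. v b \<noteq> 0}"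
    by (rule support_vec_push[OF assms(1) vecsD(2)[OF assms(3)]])
  then show ?thesis using vecsD(1,2)[OF assms(3)] assms(2) unfolding vecs_def by auto
qed

lemma finite_support_comp:
  assumes "inj_on \<psi> B" "finite {b. v b \<noteq> 0}"
  shows "finite {d\<in>B. v (\<psi> d) \<noteq> 0}"
proof -
  have "finite (\<psi> ` {d\<in>B. v (\<psi> d) \<noteq> 0})" using assms(2) by (rule finite_subset[rotated]) auto
  moreover have "inj_on \<psi> {d\<in>B. v (\<psi> d) \<noteq> 0}" using assms(1) by (rule inj_on_subset) auto
  ultimately show ?thesis by (simp add: finite_image_iff)
qed

lemma vec_pull_in_vecs:
  assumes "inj_on \<psi> (basis N)" "v \<in> vecs M"
  shows "vec_pull \<psi> (basis N) \<sigma> v \<in> vecs N"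
proof -
  have sub: "{d. vec_pull \<psi> (basis N) \<sigma> v d \<noteq> 0} \<subseteq> {d\<in>basis N. v (\<psi> d) \<noteq> 0}"
    by (auto simp: vec_pull_def)
  then have "finite {d. vec_pull \<psi> (basis N) \<sigma> v d \<noteq> 0}"
    using finite_support_comp[OF assms(1) vecsD(1)[OF assms(2)]] by (rule finite_subset)
  then show ?thesis using sub unfolding vecs_def by blast
qed

lemma vec_push_lin_co:
  assumes inj: "inj_on \<phi> (basis M)" and v: "v \<in> vecs M"
    and co: "\<And>b c. b \<in> basis M \<Longrightarrow>
       bco N S (\<phi> b) c = (if c \<in> \<phi> ` basis M then bco M S b (inv_into (basis M) \<phi> c) else 0)"
  shows "vec_push \<phi> (basis M) (lin_co M S v) = lin_co N S (vec_push \<phi> (basis M) v)"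
proof
  fix c
  let ?V = "{b. v b \<noteq> 0}"
  have injV: "inj_on \<phi> ?V" using inj vecsD(2)[OF v] by (rule inj_on_subset)
  have "lin_co N S (vec_push \<phi> (basis M) v) c = (\<Sum>b\<in>?V. vec_push \<phi> (basis M) v (\<phi> b) * bco N S (\<phi> b) c)"
    unfolding lin_co_def support_vec_push[OF inj vecsD(2)[OF v]] by (simp add: sum.reindex[OF injV])
  also have "\<dots> = (\<Sum>b\<in>?V. v b * (if c \<in> \<phi> ` basis M then bco M S b (inv_into (basis M) \<phi> c) else 0))"
    using vecsD(2)[OF v] by (intro sum.cong) (auto simp: vec_push_apply[OF inj] co)
  also have "\<dots> = vec_push \<phi> (basis M) (lin_co M S v) c"
    by (simp add: vec_push_def lin_co_def)
  finally show "vec_push \<phi> (basis M) (lin_co M S v) c = lin_co N S (vec_push \<phi> (basis M) v) c" by simp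
qed

lemma comod_map_vec_push:
  assumes inj: "inj_on \<phi> (basis M)" and img: "\<phi> ` basis M \<subseteq> basis N"
    and deg: "\<And>b. b \<in> basis M \<Longrightarrow> bdeg N (\<phi> b) = bdeg M b"
    and co: "\<And>S b c. S \<subseteq> {0,1,2} \<Longrightarrow> b \<in> basis M \<Longrightarrow>
       bco N S (\<phi> b) c = (if c \<in> \<phi> ` basis M then bco M S b (inv_into (basis M) \<phi> c) else 0)"
  shows "comod_map M N (vec_push \<phi> (basis M))"
  unfolding comod_map_def
proof (intro conjI ballI allI impI)
  fix v assume v: "v \<in> vecs M"
  show "vec_push \<phi> (basis M) v \<in> vecs N" by (rule vec_push_in_vecs[OF inj img v])
  show "homog N d (vec_push \<phi> (basis M) v)" if "homog M d v" for d
    unfolding homog_def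
  proof (intro allI impI)
    fix c assume "vec_push \<phi> (basis M) v c \<noteq> 0"
    then obtain b where "v b \<noteq> 0" "c = \<phi> b" using support_vec_push[OF inj vecsD(2)[OF v]] by blast
    then show "bdeg N c = d" using that deg vecsD(2)[OF v] unfolding homog_def by auto
  qed
  show "vec_push \<phi> (basis M) (\<lambda>x. v x + w x) = (\<lambda>y. vec_push \<phi> (basis M) v y + vec_push \<phi> (basis M) w y)"
    and "vec_push \<phi> (basis M) (\<lambda>x. c * v x) = (\<lambda>y. c * vec_push \<phi> (basis M) v y)" for w c
    by (simp_all add: vec_push_def fun_eq_iff)
  show "vec_push \<phi> (basis M) (lin_co M S v) = lin_co N S (vec_push \<phi> (basis M) v)"
    if "S \<subseteq> {0,1,2}" for S
    using vec_push_lin_co[OF inj v co[OF that]] .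
qed

lemma vec_pull_lin_co:
  assumes inj: "inj_on \<psi> (basis N)" and v: "v \<in> vecs M"
    and co: "\<And>b d. b \<in> basis M \<Longrightarrow> d \<in> basis N \<Longrightarrow>
       \<sigma> d * bco M S b (\<psi> d) = (if b \<in> \<psi> ` basis N
         then \<sigma> (inv_into (basis N) \<psi> b) * bco N S (inv_into (basis N) \<psi> b) d else 0)"
    and closed: "\<And>d' d. d' \<in> basis N \<Longrightarrow> d \<notin> basis N \<Longrightarrow> bco N S d' d = 0"
  shows "vec_pull \<psi> (basis N) \<sigma> (lin_co M S v) = lin_co N S (vec_pull \<psi> (basis N) \<sigma> v)"
proof
  fix d
  let ?V = "{b. v b \<noteq> 0}" and ?W = "{d\<in>basis N. v (\<psi> d) \<noteq> 0}"
  have injW: "inj_on \<psi> ?W" using inj by (rule inj_on_subset) auto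
  have R: "lin_co N S (vec_pull \<psi> (basis N) \<sigma> v) d = (\<Sum>d'\<in>?W. \<sigma> d' * v (\<psi> d') * bco N S d' d)"
    unfolding lin_co_def
    by (rule sum.mono_neutral_cong_left) (auto simp: vec_pull_def finite_support_comp[OF inj vecsD(1)[OF v]])
  show "vec_pull \<psi> (basis N) \<sigma> (lin_co M S v) d = lin_co N S (vec_pull \<psi> (basis N) \<sigma> v) d"
  proof (cases "d \<in> basis N")
    case False
    then show ?thesis unfolding R by (simp add: vec_pull_def closed)
  next
    case True
    have "vec_pull \<psi> (basis N) \<sigma> (lin_co M S v) d = (\<Sum>b\<in>?V. v b * (\<sigma> d * bco M S b (\<psi> d)))"
      using True by (simp add: vec_pull_def lin_co_def sum_distrib_left algebra_simps)
    also have "\<dots> = (\<Sum>b\<in>?V. if b \<in> \<psi> ` basis N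
        then v b * (\<sigma> (inv_into (basis N) \<psi> b) * bco N S (inv_into (basis N) \<psi> b) d) else 0)"
    proof (intro sum.cong refl)
      fix b assume "b \<in> ?V"
      then have "b \<in> basis M" using vecsD(2)[OF v] by blast
      then show "v b * (\<sigma> d * bco M S b (\<psi> d)) = (if b \<in> \<psi> ` basis N
        then v b * (\<sigma> (inv_into (basis N) \<psi> b) * bco N S (inv_into (basis N) \<psi> b) d) else 0)"
        using co[OF _ True] by simp
    qed
    also have "\<dots> = (\<Sum>b\<in>?V \<inter> \<psi> ` basis N. v b * (\<sigma> (inv_into (basis N) \<psi> b) * bco N S (inv_into (basis N) \<psi> b) d))"
      using vecsD(1)[OF v] by (simp add: sum.inter_restrict)
    also have "?V \<inter> \<psi> ` basis N = \<psi> ` ?W" by auto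
    also have "(\<Sum>b\<in>\<psi> ` ?W. v b * (\<sigma> (inv_into (basis N) \<psi> b) * bco N S (inv_into (basis N) \<psi> b) d))
        = (\<Sum>d'\<in>?W. \<sigma> d' * v (\<psi> d') * bco N S d' d)"
      using inj by (simp add: sum.reindex[OF injW] algebra_simps)
    finally show ?thesis using R by simp
  qed
qed

lemma comod_map_vec_pull:
  assumes inj: "inj_on \<psi> (basis N)"
    and deg: "\<And>d. d \<in> basis N \<Longrightarrow> bdeg M (\<psi> d) = bdeg N d"
    and co: "\<And>S b d. S \<subseteq> {0,1,2} \<Longrightarrow> b \<in> basis M \<Longrightarrow> d \<in> basis N \<Longrightarrow>
       \<sigma> d * bco M S b (\<psi> d) = (if b \<in> \<psi> ` basis N
         then \<sigma> (inv_into (basis N) \<psi> b) * bco N S (inv_into (basis N) \<psi> b) d else 0)"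
    and closed: "\<And>S d' d. S \<subseteq> {0,1,2} \<Longrightarrow> d' \<in> basis N \<Longrightarrow> d \<notin> basis N \<Longrightarrow> bco N S d' d = 0"
  shows "comod_map M N (vec_pull \<psi> (basis N) \<sigma>)"
  unfolding comod_map_def
proof (intro conjI ballI allI impI)
  fix v assume v: "v \<in> vecs M"
  show "vec_pull \<psi> (basis N) \<sigma> v \<in> vecs N" by (rule vec_pull_in_vecs[OF inj v])
  show "homog N d (vec_pull \<psi> (basis N) \<sigma> v)" if "homog M d v" for d
    using that deg unfolding homog_def by (auto simp: vec_pull_def)
  show "vec_pull \<psi> (basis N) \<sigma> (\<lambda>x. v x + w x) = (\<lambda>y. vec_pull \<psi> (basis N) \<sigma> v y + vec_pull \<psi> (basis N) \<sigma> w y)"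
    and "vec_pull \<psi> (basis N) \<sigma> (\<lambda>x. c * v x) = (\<lambda>y. c * vec_pull \<psi> (basis N) \<sigma> v y)" for w c
    by (simp_all add: vec_pull_def fun_eq_iff algebra_simps)
  show "vec_pull \<psi> (basis N) \<sigma> (lin_co M S v) = lin_co N S (vec_pull \<psi> (basis N) \<sigma> v)"
    if "S \<subseteq> {0,1,2}" for S
    using vec_pull_lin_co[OF inj v co[OF that] closed[OF that]] .
qed

lemma inj_on_vec_push:
  assumes "inj_on \<phi> (basis M)"
  shows "inj_on (vec_push \<phi> (basis M)) (vecs M)"
proof
  fix v v' assume v: "v \<in> vecs M" and v': "v' \<in> vecs M"
    and eq: "vec_push \<phi> (basis M) v = vec_push \<phi> (basis M) v'"
  show "v = v'"
  proof
    fix b show "v b = v' b"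
    proof (cases "b \<in> basis M")
      case True
      then show ?thesis using fun_cong[OF eq, of "\<phi> b"] by (simp add: vec_push_apply[OF assms])
    qed (simp add: vecsD(3)[OF v] vecsD(3)[OF v'])
  qed
qed

lemma exact_vec_push_restrict:
  assumes inj: "inj_on \<phi> (basis M1)" and \<phi>: "\<phi> ` basis M1 = basis M2 - basis M3"
  shows "vec_push \<phi> (basis M1) ` vecs M1 = {w \<in> vecs M2. vec_restrict (basis M3) w = (\<lambda>_. 0)}"
proof (intro equalityI subsetI)
  fix w assume "w \<in> vec_push \<phi> (basis M1) ` vecs M1"
  then obtain v where v: "v \<in> vecs M1" "w = vec_push \<phi> (basis M1) v" by blast
  have "w \<in> vecs M2" using vec_push_in_vecs[OF inj _ v(1)] \<phi> v(2) by blast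
  moreover have "vec_restrict (basis M3) w = (\<lambda>_. 0)"
    using \<phi> v(2) by (auto simp: vec_pull_def vec_push_def fun_eq_iff)
  ultimately show "w \<in> {w \<in> vecs M2. vec_restrict (basis M3) w = (\<lambda>_. 0)}" by blast
next
  fix w assume "w \<in> {w \<in> vecs M2. vec_restrict (basis M3) w = (\<lambda>_. 0)}"
  then have w: "w \<in> vecs M2" and w3: "\<And>c. c \<in> basis M3 \<Longrightarrow> w c = 0"
    by (auto simp: vec_pull_def fun_eq_iff split: if_splits)
  define v where "v = (\<lambda>b. if b \<in> basis M1 then w (\<phi> b) else 0)"
  have "\<phi> ` {b. v b \<noteq> 0} \<subseteq> {c. w c \<noteq> 0}" by (auto simp: v_def)
  then have "finite (\<phi> ` {b. v b \<noteq> 0})" using vecsD(1)[OF w] by (rule finite_subset)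
  moreover have "inj_on \<phi> {b. v b \<noteq> 0}" using inj by (rule inj_on_subset) (auto simp: v_def)
  ultimately have "finite {b. v b \<noteq> 0}" by (simp add: finite_image_iff)
  then have "v \<in> vecs M1" by (auto simp: vecs_def v_def)
  moreover have "vec_push \<phi> (basis M1) v = w"
  proof
    fix c show "vec_push \<phi> (basis M1) v c = w c"
    proof (cases "c \<in> \<phi> ` basis M1")
      case True
      then obtain b where "b \<in> basis M1" "c = \<phi> b" by blast
      then show ?thesis by (simp add: vec_push_apply[OF inj] v_def)
    next
      case False
      then have "c \<notin> basis M2 \<or> c \<in> basis M3" using \<phi> by blast
      then show ?thesis using False vecsD(3)[OF w] w3 by (auto simp: vec_push_def)
    qed
  qed
  ultimately show "w \<in> vec_push \<phi> (basis M1) ` vecs M1" by blast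
qed

lemma exact_restrict_vec_pull:
  fixes \<sigma> :: "'d \<Rightarrow> 'k::field"
  assumes \<psi>: "\<psi> ` basis M4 = basis M3 - basis M2" and \<sigma>: "\<And>d. \<sigma> d \<noteq> 0"
  shows "vec_restrict (basis M3) ` vecs M2 = {w \<in> vecs M3. vec_pull \<psi> (basis M4) \<sigma> w = (\<lambda>_. 0)}"
proof (intro equalityI subsetI)
  fix w assume "w \<in> vec_restrict (basis M3) ` vecs M2"
  then obtain v where v: "v \<in> vecs M2" "w = vec_restrict (basis M3) v" by blast
  have "{c. w c \<noteq> 0} \<subseteq> {c. v c \<noteq> 0}" "{c. w c \<noteq> 0} \<subseteq> basis M3"
    using v(2) by (auto simp: vec_pull_def split: if_splits)
  then have "w \<in> vecs M3" using vecsD(1)[OF v(1)] finite_subset unfolding vecs_def by blast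
  moreover have "vec_pull \<psi> (basis M4) \<sigma> w = (\<lambda>_. 0)"
    using \<psi> vecsD(3)[OF v(1)] v(2) by (auto simp: vec_pull_def fun_eq_iff)
  ultimately show "w \<in> {w \<in> vecs M3. vec_pull \<psi> (basis M4) \<sigma> w = (\<lambda>_. 0)}" by blast
next
  fix w assume "w \<in> {w \<in> vecs M3. vec_pull \<psi> (basis M4) \<sigma> w = (\<lambda>_. 0)}"
  then have w: "w \<in> vecs M3" and w0: "vec_pull \<psi> (basis M4) \<sigma> w = (\<lambda>_. 0)" by auto
  have "c \<in> basis M2" if "w c \<noteq> 0" for c
  proof (rule ccontr)
    assume "c \<notin> basis M2"
    moreover have "c \<in> basis M3" using vecsD(2)[OF w] that by blast
    ultimately have "c \<in> \<psi> ` basis M4" unfolding \<psi> by blast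
    then obtain d where "d \<in> basis M4" "c = \<psi> d" by blast
    then have "vec_pull \<psi> (basis M4) \<sigma> w d \<noteq> 0" using \<sigma>[of d] that by (simp add: vec_pull_def)
    then show False using w0 by simp
  qed
  then have "w \<in> vecs M2" using vecsD(1)[OF w] by (auto simp: vecs_def)
  have "vec_restrict (basis M3) w = w"
    using vecsD(3)[OF w] by (auto simp: vec_pull_def fun_eq_iff)
  then show "w \<in> vec_restrict (basis M3) ` vecs M2"
    using \<open>w \<in> vecs M2\<close> by (rule image_eqI[OF sym])
qed

lemma surj_vec_pull:
  fixes \<sigma> :: "'d \<Rightarrow> 'k::field"
  assumes inj: "inj_on \<psi> (basis M4)" and \<psi>: "\<psi> ` basis M4 \<subseteq> basis M3" and \<sigma>: "\<And>d. \<sigma> d \<noteq> 0"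
  shows "vec_pull \<psi> (basis M4) \<sigma> ` vecs M3 = vecs M4"
proof (intro equalityI subsetI)
  show "u \<in> vecs M4" if "u \<in> vec_pull \<psi> (basis M4) \<sigma> ` vecs M3" for u
    using that vec_pull_in_vecs[OF inj] by blast
next
  fix u assume u: "u \<in> vecs M4"
  define w where "w = vec_push \<psi> (basis M4) (\<lambda>d. u d / \<sigma> d)"
  have "(\<lambda>d. u d / \<sigma> d) \<in> vecs M4" using u \<sigma> by (simp add: vecs_def)
  then have "w \<in> vecs M3" unfolding w_def by (rule vec_push_in_vecs[OF inj \<psi>])
  have "vec_pull \<psi> (basis M4) \<sigma> w = u"
  proof
    fix d show "vec_pull \<psi> (basis M4) \<sigma> w d = u d"
    proof (cases "d \<in> basis M4")
      case True
      then show ?thesis using \<sigma>[of d] by (simp add: vec_pull_def w_def vec_push_apply[OF inj])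
    qed (simp add: vec_pull_def vecsD(3)[OF u])
  qed
  then show "u \<in> vec_pull \<psi> (basis M4) \<sigma> ` vecs M3"
    using \<open>w \<in> vecs M3\<close> by (rule image_eqI[OF sym])
qed

lemma exact4_vec_push_restrict_pull:
  fixes \<sigma> :: "'d \<Rightarrow> 'k::field"
  assumes f: "comod_map M1 M2 (vec_push \<phi> (basis M1))" and g: "comod_map M2 M3 (vec_restrict (basis M3))"
    and h: "comod_map M3 M4 (vec_pull \<psi> (basis M4) \<sigma>)"
    and inj\<phi>: "inj_on \<phi> (basis M1)" and \<phi>: "\<phi> ` basis M1 = basis M2 - basis M3"
    and inj\<psi>: "inj_on \<psi> (basis M4)" and \<psi>: "\<psi> ` basis M4 = basis M3 - basis M2"
    and \<sigma>: "\<And>d. \<sigma> d \<noteq> 0"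
  shows "exact4 M1 M2 M3 M4 (vec_push \<phi> (basis M1)) (vec_restrict (basis M3)) (vec_pull \<psi> (basis M4) \<sigma>)"
proof -
  have "\<psi> ` basis M4 \<subseteq> basis M3" unfolding \<psi> by (rule Diff_subset)
  then show ?thesis
    unfolding exact4_def
    by (intro conjI f g h inj_on_vec_push[OF inj\<phi>] exact_vec_push_restrict[OF inj\<phi> \<phi>]
        exact_restrict_vec_pull[OF \<psi> \<sigma>] surj_vec_pull[OF inj\<psi> _ \<sigma>])
qed

section \<open>Weights\<close>

definition zwt :: "nat \<Rightarrow> (nat \<Rightarrow> nat) \<Rightarrow> nat" where
  "zwt p e = (\<Sum>k\<in>{k. e k \<noteq> 0}. e k * p ^ k)"

text \<open>Weights on the monomials of E(2)_* (x) (A//E(1))_*: the codes 0, 1, 2 of tau_0, tau_1, tau_2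
  carry no weight, and \<open>bwt_red\<close> also ignores taubar_2, whose code is 5.\<close>

definition bwt :: "nat \<Rightarrow> bmon \<Rightarrow> nat" where
  "bwt p u = (\<Sum>c\<in>{c\<in>fst u. 3 \<le> c}. p ^ (c - 3)) + zwt p (snd u)"

definition bwt_red :: "nat \<Rightarrow> bmon \<Rightarrow> nat" where
  "bwt_red p u = (\<Sum>c\<in>{c\<in>fst u. 3 \<le> c \<and> c \<noteq> 5}. p ^ (c - 3)) + zwt p (snd u)"

lemma zwt_eq_sum_superset:
  assumes "finite A" "{k. e k \<noteq> 0} \<subseteq> A"
  shows "zwt p e = (\<Sum>k\<in>A. e k * p ^ k)"
  unfolding zwt_def by (rule sum.mono_neutral_left) (use assms in auto)

lemma zwt_zero [simp]: "zwt p (\<lambda>_. 0) = 0"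
  by (simp add: zwt_def)

lemma zwt_add:
  assumes "finite {k. e k \<noteq> 0}" "finite {k. e' k \<noteq> 0}"
  shows "zwt p (\<lambda>k. e k + e' k) = zwt p e + zwt p e'"
proof -
  let ?A = "{k. e k \<noteq> 0} \<union> {k. e' k \<noteq> 0}"
  have "zwt p (\<lambda>k. e k + e' k) = (\<Sum>k\<in>?A. (e k + e' k) * p ^ k)"
    by (rule zwt_eq_sum_superset) (use assms in auto)
  also have "\<dots> = (\<Sum>k\<in>?A. e k * p ^ k) + (\<Sum>k\<in>?A. e' k * p ^ k)"
    by (simp add: sum.distrib algebra_simps)
  also have "\<dots> = zwt p e + zwt p e'"
    using zwt_eq_sum_superset[of ?A e p] zwt_eq_sum_superset[of ?A e' p] assms by auto
  finally show ?thesis .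
qed

lemma zwt_zexp: "zwt p (zexp k c) = (if k = 0 then 0 else c * p ^ k)"
proof -
  have "zwt p (zexp k c) = (\<Sum>i\<in>{k}. zexp k c i * p ^ i)"
    by (rule zwt_eq_sum_superset) (auto simp: zexp_def split: if_splits)
  then show ?thesis by (simp add: zexp_def)
qed

lemma zwt_member_le:
  assumes "finite {k. e k \<noteq> 0}"
  shows "e k * p ^ k \<le> zwt p e"
proof (cases "e k = 0")
  case False
  then show ?thesis
    unfolding zwt_def by (intro member_le_sum[where f = "\<lambda>k. e k * p ^ k"]) (use assms in auto)
qed simp

lemma wt_eq_zwt: "wt p x = (\<Sum>n\<in>fst x. p ^ n) + zwt p (snd x)"
  by (simp add: wt_def zwt_def)

lemma finite_support_add:
  assumes "finite {k. e k \<noteq> 0}" "finite {k. e' k \<noteq> 0}"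
  shows "finite {k. e k + e' k \<noteq> (0::nat)}"
  by (rule finite_subset[of _ "{k. e k \<noteq> 0} \<union> {k. e' k \<noteq> 0}"]) (use assms in auto)

lemma sum_filter_Un_disjoint:
  assumes "finite U" "finite V" "U \<inter> V = {}"
  shows "(\<Sum>c\<in>{c\<in>U \<union> V. P c}. g c) = (\<Sum>c\<in>{c\<in>U. P c}. g c) + (\<Sum>c\<in>{c\<in>V. P c}. g c)"
proof -
  have "{c\<in>U \<union> V. P c} = {c\<in>U. P c} \<union> {c\<in>V. P c}" by auto
  then show ?thesis using assms by (simp add: sum.union_disjoint disjoint_iff)
qed

lemma
  assumes "finite U" "finite V" "U \<inter> V = {}" "finite {k. e k \<noteq> 0}" "finite {k. e' k \<noteq> 0}"
  shows bwt_mult: "bwt p (U \<union> V, \<lambda>k. e k + e' k) = bwt p (U, e) + bwt p (V, e')"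
    and bwt_red_mult: "bwt_red p (U \<union> V, \<lambda>k. e k + e' k) = bwt_red p (U, e) + bwt_red p (V, e')"
  unfolding bwt_def bwt_red_def fst_conv snd_conv zwt_add[OF assms(4,5)]
    sum_filter_Un_disjoint[OF assms(1-3)] by simp_all

lemma bwt_red_eq_bwt: "5 \<notin> fst u \<Longrightarrow> bwt_red p u = bwt p u"
  unfolding bwt_red_def bwt_def by (metis (mono_tags, lifting))

text \<open>The monomial tau_S (x) x of the coaction is coded as \<open>(S \<union> (\<lambda>n. n + 3) ` fst x, snd x)\<close>.\<close>

lemma
  assumes "S \<subseteq> {0,1,2}"
  shows bwt_code: "bwt p (S \<union> (\<lambda>n. n + 3) ` fst x, snd x) = wt p x"
    and bwt_red_code: "bwt_red p (S \<union> (\<lambda>n. n + 3) ` fst x, snd x) = wt p (fst x - {2}, snd x)"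
proof -
  have "{c \<in> S \<union> (\<lambda>n. n + 3) ` fst x. 3 \<le> c} = (\<lambda>n. n + 3) ` fst x"
    and "{c \<in> S \<union> (\<lambda>n. n + 3) ` fst x. 3 \<le> c \<and> c \<noteq> 5} = (\<lambda>n. n + 3) ` (fst x - {2})"
    using assms by auto
  then show "bwt p (S \<union> (\<lambda>n. n + 3) ` fst x, snd x) = wt p x"
    and "bwt_red p (S \<union> (\<lambda>n. n + 3) ` fst x, snd x) = wt p (fst x - {2}, snd x)"
    by (simp_all add: bwt_def bwt_red_def wt_eq_zwt sum.reindex)
qed

section \<open>Raising the indices of monomials\<close>

definition code_raise :: "nat \<Rightarrow> nat" where
  "code_raise c = (if c \<le> 2 then c else Suc c)"

text \<open>The factor zeta_1^(r + N - bwt u) pads the weight up to a value independent of u.\<close>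

definition braise :: "nat \<Rightarrow> nat \<Rightarrow> nat \<Rightarrow> bmon \<Rightarrow> bmon" where
  "braise p N r u = (code_raise ` fst u,
     \<lambda>i. if i = 0 then 0 else if i = 1 then r + (N - bwt p u) else snd u (i - 1))"

definition bmons :: "nat \<Rightarrow> nat \<Rightarrow> bmon set" where
  "bmons p N = {u. finite (fst u) \<and> finite {k. snd u k \<noteq> 0} \<and> snd u 0 = 0 \<and> bwt p u \<le> N}"

definition transports :: "('a \<Rightarrow> 'b) \<Rightarrow> 'a set \<Rightarrow> ('a \<Rightarrow> 'k::zero) \<Rightarrow> ('b \<Rightarrow> 'k) \<Rightarrow> bool" where
  "transports F D f g \<longleftrightarrow>
     (\<forall>x\<in>D. g (F x) = f x) \<and> (\<forall>y. g y \<noteq> 0 \<longrightarrow> (\<exists>x\<in>D. y = F x)) \<and> (\<forall>x. f x \<noteq> 0 \<longrightarrow> x \<in> D)"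

abbreviation bprod :: "bmon \<Rightarrow> bmon \<Rightarrow> bmon" where
  "bprod a b \<equiv> (fst a \<union> fst b, \<lambda>k. snd a k + snd b k)"

definition bfactors :: "(bmon \<Rightarrow> 'k::field) \<Rightarrow> (bmon \<Rightarrow> 'k) \<Rightarrow> bmon \<Rightarrow> (bmon \<times> bmon) set" where
  "bfactors f g m = {(a, b). f a \<noteq> 0 \<and> g b \<noteq> 0 \<and> fst a \<inter> fst b = {} \<and> bprod a b = m}"

lemma bmul_eq_sum_bfactors:
  "bmul f g m = (\<Sum>(a, b)\<in>bfactors f g m. osign (fst a) (fst b) * f a * g b)"
  by (simp add: bmul_def bfactors_def)

lemma bmul_nonzeroD:
  assumes "bmul f g m \<noteq> 0"
  obtains a b where "f a \<noteq> 0" "g b \<noteq> 0" "fst a \<inter> fst b = {}" "bprod a b = m"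
proof -
  from sum.not_neutral_contains_not_neutral[OF assms[unfolded bmul_eq_sum_bfactors]]
  obtain z where "z \<in> bfactors f g m" by blast
  then show thesis
    using that[of "fst z" "snd z"] unfolding bfactors_def by (simp add: case_prod_beta)
qed

lemma inj_code_raise: "inj code_raise"
  by (auto simp: inj_def code_raise_def split: if_splits)

lemma code_raise_less_iff: "code_raise a < code_raise b \<longleftrightarrow> a < b"
  by (auto simp: code_raise_def)

lemma osign_image_code_raise: "osign (code_raise ` U) (code_raise ` V) = osign U V"
proof -
  have "{(u, v). u \<in> code_raise ` U \<and> v \<in> code_raise ` V \<and> v < u}
      = map_prod code_raise code_raise ` {(u, v). u \<in> U \<and> v \<in> V \<and> v < u}"
    by (auto simp: code_raise_less_iff image_iff)
  moreover have "inj_on (map_prod code_raise code_raise) X" for X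
    using inj_code_raise by (auto simp: inj_on_def inj_def)
  ultimately show ?thesis unfolding osign_def by (simp add: card_image)
qed

lemma inj_on_braise: "inj_on (braise p N r) (bmons p N)"
proof
  fix x y assume x: "x \<in> bmons p N" and y: "y \<in> bmons p N" and eq: "braise p N r x = braise p N r y"
  from eq have "fst x = fst y"
    using inj_code_raise by (simp add: braise_def inj_image_eq_iff)
  moreover have "snd x i = snd y i" for i
  proof (cases i)
    case 0 then show ?thesis using x y by (simp add: bmons_def)
  next
    case (Suc k)
    have "snd (braise p N r x) (Suc i) = snd (braise p N r y) (Suc i)" using eq by simp
    then show ?thesis using Suc by (simp add: braise_def)
  qed
  ultimately show "x = y" by (simp add: prod_eq_iff fun_eq_iff)
qed

lemma bprod_in_bmons:
  assumes "a \<in> bmons p N1" "b \<in> bmons p N2" "fst a \<inter> fst b = {}"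
  shows "bprod a b \<in> bmons p (N1 + N2)" and "bwt p (bprod a b) = bwt p a + bwt p b"
proof -
  show w: "bwt p (bprod a b) = bwt p a + bwt p b"
    using bwt_mult[of "fst a" "fst b" "snd a" "snd b" p] assms by (simp add: bmons_def)
  show "bprod a b \<in> bmons p (N1 + N2)"
    using assms w finite_support_add[of "snd a" "snd b"] by (auto simp: bmons_def)
qed

lemma bprod_braise:
  assumes "a \<in> bmons p N1" "b \<in> bmons p N2" "fst a \<inter> fst b = {}"
  shows "bprod (braise p N1 r1 a) (braise p N2 r2 b) = braise p (N1 + N2) (r1 + r2) (bprod a b)"
  using assms bprod_in_bmons(2)[OF assms]
  by (auto simp: braise_def bmons_def image_Un fun_eq_iff)

lemma disjoint_braise_iff:
  "fst (braise p N1 r1 a) \<inter> fst (braise p N2 r2 b) = {} \<longleftrightarrow> fst a \<inter> fst b = {}"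
  using inj_code_raise by (auto simp: braise_def inj_def)

lemma osign_braise: "osign (fst (braise p N1 r1 a)) (fst (braise p N2 r2 b)) = osign (fst a) (fst b)"
  by (simp add: braise_def osign_image_code_raise)

lemma bfactors_subset_bmons:
  assumes "transports F1 (bmons p N1) f F" "transports F2 (bmons p N2) g G"
  shows "bfactors f g x \<subseteq> bmons p N1 \<times> bmons p N2"
  using assms by (auto simp: bfactors_def transports_def)

lemma bfactors_braise:
  assumes tf: "transports (braise p N1 r1) (bmons p N1) f F"
    and tg: "transports (braise p N2 r2) (bmons p N2) g G"
    and x: "x \<in> bmons p (N1 + N2)"
  shows "bfactors F G (braise p (N1 + N2) (r1 + r2) x)
       = map_prod (braise p N1 r1) (braise p N2 r2) ` bfactors f g x"
proof (intro equalityI subsetI)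
  fix z assume "z \<in> bfactors F G (braise p (N1 + N2) (r1 + r2) x)"
  then obtain a' b' where z: "z = (a', b')" "F a' \<noteq> 0" "G b' \<noteq> 0" "fst a' \<inter> fst b' = {}"
    "bprod a' b' = braise p (N1 + N2) (r1 + r2) x"
    by (auto simp: bfactors_def)
  obtain a b where a: "a \<in> bmons p N1" "a' = braise p N1 r1 a" and b: "b \<in> bmons p N2" "b' = braise p N2 r2 b"
    using z(2,3) tf tg unfolding transports_def by blast
  have d: "fst a \<inter> fst b = {}" using z(4) unfolding a(2) b(2) disjoint_braise_iff .
  have "braise p (N1 + N2) (r1 + r2) (bprod a b) = braise p (N1 + N2) (r1 + r2) x"
    using bprod_braise[OF a(1) b(1) d] z(5) unfolding a(2) b(2) by simp
  then have "bprod a b = x"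
    using inj_onD[OF inj_on_braise _ bprod_in_bmons(1)[OF a(1) b(1) d] x] by blast
  moreover have "f a \<noteq> 0" "g b \<noteq> 0"
    using z(2,3) a b tf tg unfolding transports_def by auto
  ultimately show "z \<in> map_prod (braise p N1 r1) (braise p N2 r2) ` bfactors f g x"
    using d z(1) a(2) b(2) by (auto simp: bfactors_def)
next
  fix z assume "z \<in> map_prod (braise p N1 r1) (braise p N2 r2) ` bfactors f g x"
  then obtain a b where z: "z = (braise p N1 r1 a, braise p N2 r2 b)" "(a, b) \<in> bfactors f g x"
    by auto
  have ab: "a \<in> bmons p N1" "b \<in> bmons p N2"
    using bfactors_subset_bmons[OF tf tg, of x] z(2) by blast+
  have "F (braise p N1 r1 a) = f a" "G (braise p N2 r2 b) = g b"
    using ab tf tg unfolding transports_def by auto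
  then show "z \<in> bfactors F G (braise p (N1 + N2) (r1 + r2) x)"
    using z bprod_braise[OF ab] disjoint_braise_iff by (auto simp: bfactors_def)
qed

lemma bmul_braise:
  assumes tf: "transports (braise p N1 r1) (bmons p N1) f F"
    and tg: "transports (braise p N2 r2) (bmons p N2) g G"
    and x: "x \<in> bmons p (N1 + N2)"
  shows "bmul F G (braise p (N1 + N2) (r1 + r2) x) = bmul f g x"
proof -
  have inj: "inj_on (map_prod (braise p N1 r1) (braise p N2 r2)) (bfactors f g x)"
    using map_prod_inj_on[OF inj_on_braise inj_on_braise] bfactors_subset_bmons[OF tf tg]
    by (rule inj_on_subset)
  have "bmul F G (braise p (N1 + N2) (r1 + r2) x)
      = (\<Sum>(a, b)\<in>bfactors f g x. osign (fst (braise p N1 r1 a)) (fst (braise p N2 r2 b))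
           * F (braise p N1 r1 a) * G (braise p N2 r2 b))"
    unfolding bmul_eq_sum_bfactors bfactors_braise[OF tf tg x] sum.reindex[OF inj]
    by (simp add: case_prod_beta)
  also have "\<dots> = bmul f g x"
    unfolding bmul_eq_sum_bfactors osign_braise
  proof (intro sum.cong refl, clarify)
    fix a b assume "(a, b) \<in> bfactors f g x"
    then have "a \<in> bmons p N1" "b \<in> bmons p N2"
      using bfactors_subset_bmons[OF tf tg, of x] by blast+
    then show "osign (fst a) (fst b) * F (braise p N1 r1 a) * G (braise p N2 r2 b)
             = osign (fst a) (fst b) * f a * g b"
      using tf tg by (simp add: transports_def)
  qed
  finally show ?thesis .
qed

lemma transports_bmul:
  assumes tf: "transports (braise p N1 r1) (bmons p N1) f F"
    and tg: "transports (braise p N2 r2) (bmons p N2) g G"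
  shows "transports (braise p (N1 + N2) (r1 + r2)) (bmons p (N1 + N2)) (bmul f g) (bmul F G)"
  unfolding transports_def
proof (intro conjI ballI allI impI)
  show "bmul F G (braise p (N1 + N2) (r1 + r2) x) = bmul f g x" if "x \<in> bmons p (N1 + N2)" for x
    using bmul_braise[OF tf tg that] .
next
  fix x assume "bmul f g x \<noteq> 0"
  then obtain a b where "f a \<noteq> 0" "g b \<noteq> 0" "fst a \<inter> fst b = {}" "bprod a b = x"
    by (rule bmul_nonzeroD)
  then show "x \<in> bmons p (N1 + N2)"
    using bprod_in_bmons(1)[of a p N1 b N2] tf tg unfolding transports_def by blast
next
  fix y assume "bmul F G y \<noteq> 0"
  then obtain a' b' where ab: "F a' \<noteq> 0" "G b' \<noteq> 0" "fst a' \<inter> fst b' = {}" "bprod a' b' = y"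
    by (rule bmul_nonzeroD)
  obtain a b where a: "a \<in> bmons p N1" "a' = braise p N1 r1 a" and b: "b \<in> bmons p N2" "b' = braise p N2 r2 b"
    using ab(1,2) tf tg unfolding transports_def by blast
  have d: "fst a \<inter> fst b = {}" using ab(3) unfolding a(2) b(2) disjoint_braise_iff .
  show "\<exists>x\<in>bmons p (N1 + N2). y = braise p (N1 + N2) (r1 + r2) x"
    using bprod_braise[OF a(1) b(1) d] bprod_in_bmons(1)[OF a(1) b(1) d] ab(4)
    unfolding a(2) b(2) by metis
qed

lemma transports_bsingle:
  assumes "x \<in> D" "inj_on F D"
  shows "transports F D (bsingle x c) (bsingle (F x) c)"
  using assms unfolding transports_def bsingle_def by (auto dest: inj_onD)

lemma transports_add:
  fixes f f' :: "'a \<Rightarrow> 'k::monoid_add"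
  assumes "transports F D f g" "transports F D f' g'"
  shows "transports F D (\<lambda>x. f x + f' x) (\<lambda>y. g y + g' y)"
  using assms unfolding transports_def
proof (intro conjI ballI allI impI)
  fix y assume "g y + g' y \<noteq> 0"
  then have "g y \<noteq> 0 \<or> g' y \<noteq> 0" by auto
  then show "\<exists>x\<in>D. y = F x" using assms unfolding transports_def by blast
next
  fix x assume "f x + f' x \<noteq> 0"
  then have "f x \<noteq> 0 \<or> f' x \<noteq> 0" by auto
  then show "x \<in> D" using assms unfolding transports_def by blast
qed (simp add: transports_def)

lemma A_basisD:
  assumes "x \<in> A_basis"
  shows "finite (fst x)" "\<forall>n\<in>fst x. 2 \<le> n" "finite {k. snd x k \<noteq> 0}" "snd x 0 = 0"
  using assms by (auto simp: A_basis_def)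

definition raise :: "amon \<Rightarrow> nat \<Rightarrow> amon" where
  "raise y c = (Suc ` fst y, \<lambda>i. if i = 0 then 0 else if i = 1 then c else snd y (i - 1))"

definition lift :: "nat \<Rightarrow> nat \<Rightarrow> nat \<Rightarrow> amon \<Rightarrow> amon" where
  "lift p N r x = raise x (r + (N - wt p x))"

definition lower :: "amon \<Rightarrow> amon" where
  "lower m = ((\<lambda>n. n - 1) ` fst m, \<lambda>i. if i = 0 then 0 else snd m (Suc i))"

lemma support_raise:
  assumes "y \<in> A_basis"
  shows "{k. snd (raise y c) k \<noteq> 0} \<subseteq> insert 1 (Suc ` {k. snd y k \<noteq> 0})"
proof
  fix k assume k: "k \<in> {k. snd (raise y c) k \<noteq> 0}"
  show "k \<in> insert 1 (Suc ` {k. snd y k \<noteq> 0})"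
  proof (cases k)
    case (Suc k')
    then show ?thesis using k by (cases k') (auto simp: raise_def)
  qed (use k in \<open>simp add: raise_def\<close>)
qed

lemma sum_support_raise:
  assumes y: "y \<in> A_basis" and F0: "\<And>k. F 0 k = 0"
  shows "(\<Sum>k\<in>{k. snd (raise y c) k \<noteq> 0}. F (snd (raise y c) k) k)
       = F c 1 + (\<Sum>k\<in>{k. snd y k \<noteq> 0}. F (snd y k) (Suc k))"
proof -
  let ?E = "{k. snd y k \<noteq> 0}"
  have fin: "finite (insert 1 (Suc ` ?E))" and one: "1 \<notin> Suc ` ?E"
    using A_basisD(3,4)[OF y] by auto
  have "(\<Sum>k\<in>{k. snd (raise y c) k \<noteq> 0}. F (snd (raise y c) k) k)
      = (\<Sum>k\<in>insert 1 (Suc ` ?E). F (snd (raise y c) k) k)"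
    by (rule sum.mono_neutral_left) (use fin support_raise[OF y] F0 in auto)
  also have "\<dots> = F c 1 + (\<Sum>k\<in>?E. F (snd (raise y c) (Suc k)) (Suc k))"
    using fin one by (simp add: sum.reindex raise_def)
  also have "(\<Sum>k\<in>?E. F (snd (raise y c) (Suc k)) (Suc k)) = (\<Sum>k\<in>?E. F (snd y k) (Suc k))"
    using A_basisD(4)[OF y] by (intro sum.cong) (auto simp: raise_def)
  finally show ?thesis .
qed

lemma wt_raise:
  assumes y: "y \<in> A_basis"
  shows "wt p (raise y c) = p * c + p * wt p y"
proof -
  have "(\<Sum>n\<in>fst (raise y c). p ^ n) = p * (\<Sum>n\<in>fst y. p ^ n)"
    by (simp add: raise_def sum.reindex sum_distrib_left)
  moreover have "zwt p (snd (raise y c)) = c * p + (\<Sum>k\<in>{k. snd y k \<noteq> 0}. snd y k * p ^ Suc k)"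
    unfolding zwt_def using sum_support_raise[OF y, of "\<lambda>a k. a * p ^ k" c] by simp
  moreover have "(\<Sum>k\<in>{k. snd y k \<noteq> 0}. snd y k * p ^ Suc k) = p * zwt p (snd y)"
    by (simp add: zwt_def sum_distrib_left algebra_simps)
  ultimately show ?thesis by (simp add: wt_eq_zwt algebra_simps)
qed

lemma A_deg_raise:
  assumes y: "y \<in> A_basis"
  shows "A_deg p (raise y c) = A_deg p y + qq p * int (c + wt p y)"
proof -
  let ?E = "{k. snd y k \<noteq> 0}"
  have "(\<Sum>n\<in>fst (raise y c). 2 * int p ^ n - 1) = (\<Sum>n\<in>fst y. 2 * int p ^ Suc n - 1)"
    by (simp add: raise_def sum.reindex)
  also have "\<dots> = (\<Sum>n\<in>fst y. 2 * int p ^ n - 1) + qq p * (\<Sum>n\<in>fst y. int p ^ n)"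
    by (simp add: qq_def sum_distrib_left flip: sum.distrib) (simp add: algebra_simps)
  finally have odd_part: "(\<Sum>n\<in>fst (raise y c). 2 * int p ^ n - 1)
      = (\<Sum>n\<in>fst y. 2 * int p ^ n - 1) + qq p * (\<Sum>n\<in>fst y. int p ^ n)" .
  have "(\<Sum>k\<in>{k. snd (raise y c) k \<noteq> 0}. int (snd (raise y c) k) * 2 * (int p ^ k - 1))
      = int c * 2 * (int p - 1) + (\<Sum>k\<in>?E. int (snd y k) * 2 * (int p ^ Suc k - 1))"
    using sum_support_raise[OF y, of "\<lambda>a k. int a * 2 * (int p ^ k - 1)" c] by simp
  also have "(\<Sum>k\<in>?E. int (snd y k) * 2 * (int p ^ Suc k - 1))
      = (\<Sum>k\<in>?E. int (snd y k) * 2 * (int p ^ k - 1)) + qq p * (\<Sum>k\<in>?E. int (snd y k) * int p ^ k)"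
    by (simp add: qq_def sum_distrib_left flip: sum.distrib) (simp add: algebra_simps)
  finally have even_part: "(\<Sum>k\<in>{k. snd (raise y c) k \<noteq> 0}. int (snd (raise y c) k) * 2 * (int p ^ k - 1))
      = int c * 2 * (int p - 1) + (\<Sum>k\<in>?E. int (snd y k) * 2 * (int p ^ k - 1))
        + qq p * (\<Sum>k\<in>?E. int (snd y k) * int p ^ k)" by simp
  have "int (wt p y) = (\<Sum>n\<in>fst y. int p ^ n) + (\<Sum>k\<in>?E. int (snd y k) * int p ^ k)"
    by (simp add: wt_def)
  then show ?thesis
    unfolding A_deg_def odd_part even_part by (simp add: qq_def algebra_simps)
qed

lemma raise_in_A_basis:
  assumes y: "y \<in> A_basis"
  shows "raise y c \<in> A_basis" and "\<forall>n\<in>fst (raise y c). 3 \<le> n"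
proof -
  have "finite {k. snd (raise y c) k \<noteq> 0}"
    using finite_subset[OF support_raise[OF y]] A_basisD(3)[OF y] by simp
  then show "raise y c \<in> A_basis" using A_basisD[OF y] by (auto simp: A_basis_def raise_def)
  show "\<forall>n\<in>fst (raise y c). 3 \<le> n" using A_basisD(2)[OF y] by (auto simp: raise_def)
qed

lemma raise_inject:
  assumes y: "y \<in> A_basis" and y': "y' \<in> A_basis" and eq: "raise y c = raise y' c'"
  shows "y = y'" and "c = c'"
proof -
  have "Suc ` fst y = Suc ` fst y'" using eq by (simp add: raise_def)
  then have "fst y = fst y'" by (simp add: inj_image_eq_iff)
  moreover have "snd y i = snd y' i" for i
  proof (cases i)
    case 0 then show ?thesis using A_basisD(4)[OF y] A_basisD(4)[OF y'] by simp
  next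
    case (Suc k)
    have "snd (raise y c) (Suc i) = snd (raise y' c') (Suc i)" using eq by simp
    then show ?thesis using Suc by (simp add: raise_def)
  qed
  ultimately show "y = y'" by (simp add: prod_eq_iff fun_eq_iff)
  have "snd (raise y c) 1 = snd (raise y' c') 1" using eq by simp
  then show "c = c'" by (simp add: raise_def)
qed

lemma lower_in_A_basis:
  assumes m: "m \<in> A_basis" and m3: "\<forall>n\<in>fst m. 3 \<le> n"
  shows "lower m \<in> A_basis"
proof -
  have "{k. snd (lower m) k \<noteq> 0} \<subseteq> (\<lambda>k. k - 1) ` {k. snd m k \<noteq> 0}"
  proof
    fix k assume "k \<in> {k. snd (lower m) k \<noteq> 0}"
    then have "snd m (Suc k) \<noteq> 0" by (simp add: lower_def split: if_splits)
    then show "k \<in> (\<lambda>k. k - 1) ` {k. snd m k \<noteq> 0}" by (intro image_eqI[where x = "Suc k"]) auto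
  qed
  then have "finite {k. snd (lower m) k \<noteq> 0}"
    using A_basisD(3)[OF m] by (metis finite_imageI finite_subset)
  then show ?thesis using A_basisD[OF m] m3 by (auto simp: A_basis_def lower_def)
qed

lemma raise_lower:
  assumes m: "m \<in> A_basis" and m1: "\<forall>n\<in>fst m. 1 \<le> n"
  shows "raise (lower m) (snd m 1) = m"
proof -
  have "Suc ` fst (lower m) = fst m"
  proof -
    have "Suc ` fst (lower m) = (\<lambda>n. Suc (n - 1)) ` fst m" by (simp add: lower_def image_image)
    also have "\<dots> = (\<lambda>n. n) ` fst m" by (rule image_cong) (use m1 in auto)
    finally show ?thesis by simp
  qed
  moreover have "(\<lambda>i. if i = 0 then 0 else if i = 1 then snd m 1 else snd (lower m) (i - 1)) = snd m"
  proof
    fix i show "(if i = 0 then 0 else if i = 1 then snd m 1 else snd (lower m) (i - 1)) = snd m i"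
      using A_basisD(4)[OF m] by (cases i) (auto simp: lower_def)
  qed
  ultimately show ?thesis unfolding raise_def by simp
qed

lemma dvd_wt:
  assumes y: "y \<in> A_basis"
  shows "p dvd wt p y"
proof -
  have "p dvd (\<Sum>n\<in>fst y. p ^ n)"
    by (rule dvd_sum) (use A_basisD(2)[OF y] in \<open>auto intro: dvd_power\<close>)
  moreover have "p dvd zwt p (snd y)"
    unfolding zwt_def
  proof (rule dvd_sum)
    fix k assume "k \<in> {k. snd y k \<noteq> 0}"
    then have "k \<noteq> 0" using A_basisD(4)[OF y] by (intro notI) simp
    then show "p dvd snd y k * p ^ k" by (simp add: dvd_power)
  qed
  ultimately show ?thesis by (simp add: wt_eq_zwt)
qed

lemma
  assumes x: "x \<in> A_basis" and w: "wt p x \<le> N"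
  shows lift_in_A_basis: "lift p N r x \<in> A_basis"
    and lift_indices_ge3: "\<forall>n\<in>fst (lift p N r x). 3 \<le> n"
    and wt_lift: "wt p (lift p N r x) = p * (r + N)"
    and A_deg_lift: "A_deg p (lift p N r x) = A_deg p x + qq p * int (r + N)"
proof -
  show "lift p N r x \<in> A_basis" "\<forall>n\<in>fst (lift p N r x). 3 \<le> n"
    using raise_in_A_basis[OF x] by (simp_all add: lift_def)
  have e: "r + (N - wt p x) + wt p x = r + N" using w by simp
  show "wt p (lift p N r x) = p * (r + N)"
    unfolding lift_def wt_raise[OF x] add_mult_distrib2[symmetric] e ..
  show "A_deg p (lift p N r x) = A_deg p x + qq p * int (r + N)"
    unfolding lift_def A_deg_raise[OF x] e ..
qed

lemma lift_inject:
  assumes "x \<in> A_basis" "x' \<in> A_basis" "wt p x \<le> N" "wt p x' \<le> N"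
    and eq: "lift p N r x = lift p N r' x'"
  shows "x = x'" and "r = r'"
  using raise_inject[OF assms(1,2) eq[unfolded lift_def]] assms(3,4) by auto

lemma lift_surj:
  assumes p: "0 < p" and m: "m \<in> A_basis" and m3: "\<forall>n\<in>fst m. 3 \<le> n"
    and w: "wt p m = p * (p * a + k)" and k: "k < p"
  obtains y where "y \<in> A_basis" "wt p y \<le> p * a" "m = lift p (p * a) k y"
proof -
  define y where "y = lower m"
  have y: "y \<in> A_basis" using lower_in_A_basis[OF m m3] by (simp add: y_def)
  have my: "raise y (snd m 1) = m" using raise_lower[OF m] m3 by (force simp: y_def)
  have "wt p m = p * (snd m 1 + wt p y)" using wt_raise[OF y, of p "snd m 1"] my by (simp add: algebra_simps)
  then have s: "snd m 1 + wt p y = p * a + k" using w p by simp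
  obtain t where t: "wt p y = p * t" using dvd_wt[OF y, of p] by (auto elim: dvdE)
  have "t \<le> a"
  proof (rule ccontr)
    assume "\<not> t \<le> a"
    then have "p * (a + 1) \<le> p * t" using mult_le_mono2[of "a + 1" t p] by simp
    then show False using s t k by (simp add: algebra_simps)
  qed
  then have "p * t \<le> p * a" by simp
  then have "snd m 1 = k + (p * a - wt p y)" using s t by simp
  then show ?thesis using that y my t \<open>p * t \<le> p * a\<close> by (simp add: lift_def)
qed

section \<open>The coaction of raised monomials\<close>

lemma alpha_tb_eq:
  "alpha_tb p n = (\<lambda>m. bsingle ({n + 3}, \<lambda>_. 0) 1 m + (bsingle ({0}, zexp (n - 0) (p ^ 0)) 1 m
     + (bsingle ({1}, zexp (n - 1) (p ^ 1)) 1 m + bsingle ({2}, zexp (n - 2) (p ^ 2)) 1 m)))"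
  by (simp add: alpha_tb_def)

lemma alpha_tb_nonzeroD:
  assumes "alpha_tb p n a \<noteq> (0::'k::field)"
  shows "a = ({n + 3}, \<lambda>_. 0) \<or> (\<exists>l\<le>2. a = ({l}, zexp (n - l) (p ^ l)))"
proof (rule ccontr)
  assume "\<not> ?thesis"
  then have "a \<noteq> ({n + 3}, \<lambda>_. 0)" "a \<noteq> ({0}, zexp (n - 0) (p ^ 0))"
    "a \<noteq> ({1}, zexp (n - 1) (p ^ 1))" "a \<noteq> ({2}, zexp (n - 2) (p ^ 2))"
    by (metis le0, metis le0, metis one_le_numeral, metis order_refl)
  then have "alpha_tb p n a = (0::'k)" unfolding alpha_tb_eq bsingle_def by simp
  then show False using assms by simp
qed

lemma zexp_0 [simp]: "zexp k c 0 = 0"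
  by (simp add: zexp_def)

lemma finite_support_zexp [simp]: "finite {i. zexp k c i \<noteq> 0}" "finite {i. 0 < zexp k c i}"
  by (rule finite_subset[of _ "{k}"], auto simp: zexp_def split: if_splits)+

lemma bwt_tb_term: "bwt p ({n + 3}, \<lambda>_. 0) = p ^ n"
proof -
  have "{c\<in>{n + 3}. 3 \<le> c} = {n + 3}" by auto
  then show ?thesis by (simp add: bwt_def)
qed

lemma bwt_tau_term: "l \<le> 2 \<Longrightarrow> bwt p ({l}, zexp k c) = (if k = 0 then 0 else c * p ^ k)"
  by (simp add: bwt_def zwt_zexp)

lemma transports_alpha_tb:
  assumes "0 < p" "2 \<le> n"
  shows "transports (braise p (p ^ n) 0) (bmons p (p ^ n)) (alpha_tb p n) (alpha_tb p (Suc n))"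
proof -
  let ?F = "braise p (p ^ n) 0" and ?D = "bmons p (p ^ n)"
  have tb: "transports ?F ?D (bsingle ({n + 3}, \<lambda>_. 0) 1) (bsingle ({Suc n + 3}, \<lambda>_. 0) 1)"
  proof -
    have "({n + 3}, \<lambda>_. 0) \<in> ?D" by (simp add: bmons_def bwt_tb_term)
    moreover have "?F ({n + 3}, \<lambda>_. 0) = ({Suc n + 3}, \<lambda>_. 0)"
      using assms by (auto simp: braise_def bwt_tb_term code_raise_def fun_eq_iff)
    ultimately show ?thesis using transports_bsingle[OF _ inj_on_braise] by metis
  qed
  have tau: "transports ?F ?D (bsingle ({l}, zexp (n - l) (p ^ l)) 1) (bsingle ({l}, zexp (Suc n - l) (p ^ l)) 1)"
    if "l \<le> 2" for l
  proof -
    have w: "bwt p ({l}, zexp (n - l) (p ^ l)) = (if n = l then 0 else p ^ n)"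
      using assms that by (simp add: bwt_tau_term power_add[symmetric])
    have "({l}, zexp (n - l) (p ^ l)) \<in> ?D"
      using w by (simp add: bmons_def)
    moreover have "?F ({l}, zexp (n - l) (p ^ l)) = ({l}, zexp (Suc n - l) (p ^ l))"
      using assms that unfolding braise_def w by (auto simp: code_raise_def fun_eq_iff zexp_def)
    ultimately show ?thesis using transports_bsingle[OF _ inj_on_braise] by metis
  qed
  show ?thesis
    unfolding alpha_tb_eq[of p n] alpha_tb_eq[of p "Suc n"]
    by (intro transports_add tb tau) simp_all
qed

lemma transports_foldr_alpha_tb:
  assumes "0 < p" "\<forall>n\<in>set L. 2 \<le> n"
  shows "transports (braise p (\<Sum>n\<leftarrow>L. p ^ n) 0) (bmons p (\<Sum>n\<leftarrow>L. p ^ n))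
           (foldr bmul (map (alpha_tb p) L) (bsingle ({}, \<lambda>_. 0) (1::'k::field)))
           (foldr bmul (map (alpha_tb p) (map Suc L)) (bsingle ({}, \<lambda>_. 0) 1))"
  using assms(2)
proof (induction L)
  case Nil
  have D: "({}, \<lambda>_. 0) \<in> bmons p 0" by (simp add: bmons_def bwt_def)
  have "braise p 0 0 ({}, \<lambda>_. 0) = ({}, \<lambda>_. 0)" by (simp add: braise_def bwt_def fun_eq_iff)
  then show ?case using transports_bsingle[OF D inj_on_braise, of 0 1] by simp
next
  case (Cons n L)
  then show ?case
    using transports_bmul[OF transports_alpha_tb[OF assms(1), of n] Cons.IH] by simp
qed

lemma sorted_list_of_set_image_Suc:
  assumes "finite T"
  shows "sorted_list_of_set (Suc ` T) = map Suc (sorted_list_of_set T)"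
proof -
  let ?L = "sorted_list_of_set T"
  have "sorted_wrt (<) (map Suc ?L)"
    using sorted_list_of_set.strict_sorted_key_list_of_set[of T] by (simp add: sorted_wrt_map)
  moreover have "set (map Suc ?L) = Suc ` T" "length (map Suc ?L) = card (Suc ` T)"
    using assms by (simp_all add: card_image)
  ultimately show ?thesis
    using sorted_list_of_set_unique[of "Suc ` T" "map Suc ?L"] assms by simp
qed

text \<open>The coaction formula of taubar_(n+1) is that of taubar_n with all indices of taubar and zeta
  raised, and alpha is multiplicative.\<close>

lemma transports_alpha_A:
  assumes p: "0 < p" and x: "x \<in> A_basis" and w: "wt p x \<le> N"
  shows "transports (braise p N r) (bmons p N) (alpha_A p x :: bmon \<Rightarrow> 'k::field) (alpha_A p (lift p N r x))"
proof -
  obtain T e where xe: "x = (T, e)" by (cases x)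
  have fT: "finite T" and T2: "\<forall>n\<in>T. 2 \<le> n" and fe: "finite {k. e k \<noteq> 0}" and e0: "e 0 = 0"
    using A_basisD[OF x] xe by auto
  let ?L = "sorted_list_of_set T" and ?s = "\<Sum>n\<in>T. p ^ n"
  have R: "transports (braise p ?s 0) (bmons p ?s)
           (foldr bmul (map (alpha_tb p) ?L) (bsingle ({}, \<lambda>_. 0) (1::'k)))
           (foldr bmul (map (alpha_tb p) (map Suc ?L)) (bsingle ({}, \<lambda>_. 0) 1))"
    using transports_foldr_alpha_tb[OF p, of ?L] T2 fT by (simp add: sum_list_distinct_conv_sum_set)
  have wx: "wt p x = ?s + zwt p e" using wt_eq_zwt[of p x] xe by simp
  have wb: "bwt p ({}, e) = zwt p e" by (simp add: bwt_def)
  have D: "({}, e) \<in> bmons p (N - ?s)" using fe e0 w wx wb by (simp add: bmons_def)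
  have "braise p (N - ?s) r ({}, e) = ({}, snd (lift p N r x))"
    using wx wb e0 by (auto simp: braise_def lift_def raise_def fun_eq_iff xe)
  then have S: "transports (braise p (N - ?s) r) (bmons p (N - ?s))
      (bsingle ({}, e) (1::'k)) (bsingle ({}, snd (lift p N r x)) 1)"
    using transports_bsingle[OF D inj_on_braise] by metis
  have "N - ?s + ?s = N" using w wx by simp
  then show ?thesis
    using transports_bmul[OF S R] unfolding alpha_A_def
    by (simp add: xe lift_def raise_def sorted_list_of_set_image_Suc[OF fT])
qed

lemma alpha_tb_nonzero_weights:
  assumes p: "0 < p" and n: "2 \<le> n" and nz: "alpha_tb p n a \<noteq> (0::'k::field)"
  shows "a \<in> bmons p (p ^ n)" and "\<exists>c. fst a = {c} \<and> c \<in> {0, 1, 2, n + 3}"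
    and "(if n = 2 then 0 else p ^ n) \<le> bwt_red p a"
proof -
  consider "a = ({n + 3}, \<lambda>_. 0)" | l where "l \<le> 2" "a = ({l}, zexp (n - l) (p ^ l))"
    using alpha_tb_nonzeroD[OF nz] by blast
  then have "a \<in> bmons p (p ^ n) \<and> (\<exists>c. fst a = {c} \<and> c \<in> {0, 1, 2, n + 3})
    \<and> (if n = 2 then 0 else p ^ n) \<le> bwt_red p a"
  proof cases
    case 1
    have "{c\<in>{n + 3}. 3 \<le> c \<and> c \<noteq> 5} = (if n = 2 then {} else {n + 3})" by auto
    then have "bwt_red p a = (if n = 2 then 0 else p ^ n)" using 1 by (simp add: bwt_red_def)
    then show ?thesis using 1 bwt_tb_term[of p n] by (simp add: bmons_def)
  next
    case (2 l)
    have "bwt p a = (if n = l then 0 else p ^ n)"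
      using 2 p n by (simp add: bwt_tau_term power_add[symmetric])
    moreover have "bwt_red p a = bwt p a" using 2 by (intro bwt_red_eq_bwt) auto
    ultimately show ?thesis using 2 n by (auto simp: bmons_def)
  qed
  then show "a \<in> bmons p (p ^ n)" "\<exists>c. fst a = {c} \<and> c \<in> {0, 1, 2, n + 3}"
    "(if n = 2 then 0 else p ^ n) \<le> bwt_red p a" by blast+
qed

lemma foldr_alpha_tb_nonzeroD:
  assumes p: "0 < p" and L: "\<forall>n\<in>set L. 2 \<le> n"
    and nz: "foldr bmul (map (alpha_tb p) L) (bsingle ({}, \<lambda>_. 0) (1::'k::field)) u \<noteq> 0"
  shows "u \<in> bmons p (\<Sum>n\<leftarrow>L. p ^ n) \<and> fst u \<subseteq> {0,1,2} \<union> (\<lambda>n. n + 3) ` set L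
    \<and> card (fst u) = length L \<and> (\<Sum>n\<leftarrow>L. if n = 2 then 0 else p ^ n) \<le> bwt_red p u"
  using L nz
proof (induction L arbitrary: u)
  case Nil
  then have "u = ({}, \<lambda>_. 0)" by (auto simp: bsingle_def split: if_splits)
  then show ?case by (simp add: bmons_def bwt_def)
next
  case (Cons n L)
  have "bmul (alpha_tb p n) (foldr bmul (map (alpha_tb p) L) (bsingle ({}, \<lambda>_. 0) (1::'k))) u \<noteq> 0"
    using Cons.prems(2) by simp
  then obtain a b where ab: "alpha_tb p n a \<noteq> (0::'k)"
    "foldr bmul (map (alpha_tb p) L) (bsingle ({}, \<lambda>_. 0) (1::'k)) b \<noteq> 0"
    "fst a \<inter> fst b = {}" "bprod a b = u"
    by (rule bmul_nonzeroD)
  have n: "2 \<le> n" using Cons.prems by simp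
  note a = alpha_tb_nonzero_weights[OF p n ab(1)]
  obtain c where c: "fst a = {c}" "c \<in> {0, 1, 2, n + 3}" using a(2) by blast
  have b: "b \<in> bmons p (\<Sum>n\<leftarrow>L. p ^ n)" "fst b \<subseteq> {0,1,2} \<union> (\<lambda>n. n + 3) ` set L"
    "card (fst b) = length L" "(\<Sum>n\<leftarrow>L. if n = 2 then 0 else p ^ n) \<le> bwt_red p b"
    using Cons.IH[OF _ ab(2)] Cons.prems(1) by simp_all
  have "c \<notin> fst b" using ab(3) c by auto
  then have "card (fst u) = length (n # L)"
    using ab(4) c(1) b(3) card_insert_disjoint[of "fst b" c] b(1) by (auto simp: bmons_def)
  moreover have "bwt_red p u = bwt_red p a + bwt_red p b"
    using bwt_red_mult[of "fst a" "fst b" "snd a" "snd b" p] ab(3,4) a(1) b(1) by (simp add: bmons_def)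
  ultimately show ?case
    using bprod_in_bmons(1)[OF a(1) b(1) ab(3)] ab(4) a(3) b(2,4) c by auto
qed

lemma sum_if_eq_sum_diff:
  assumes "finite T"
  shows "(\<Sum>n\<in>T. if n = a then 0 else f n) = (\<Sum>n\<in>T - {a}. f n :: 'b::comm_monoid_add)"
  using assms by (simp add: sum.If_cases Diff_eq)

lemma alpha_A_nonzeroD:
  assumes p: "0 < p" and x: "x \<in> A_basis" and nz: "alpha_A p x u \<noteq> (0::'k::field)"
  shows "u \<in> bmons p (wt p x)" and "fst u \<subseteq> {0,1,2} \<union> (\<lambda>n. n + 3) ` fst x"
    and "card (fst u) = card (fst x)" and "wt p (fst x - {2}, snd x) \<le> bwt_red p u"
proof -
  obtain T e where xe: "x = (T, e)" by (cases x)
  have fT: "finite T" and T2: "\<forall>n\<in>T. 2 \<le> n" and fe: "finite {k. e k \<noteq> 0}" and e0: "e 0 = 0"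
    using A_basisD[OF x] xe by auto
  let ?L = "sorted_list_of_set T"
  from nz obtain a b where ab: "bsingle ({}, e) (1::'k) a \<noteq> 0"
    "foldr bmul (map (alpha_tb p) ?L) (bsingle ({}, \<lambda>_. 0) (1::'k)) b \<noteq> 0"
    "fst a \<inter> fst b = {}" "bprod a b = u"
    unfolding alpha_A_def xe by (auto elim: bmul_nonzeroD)
  have a: "a = ({}, e)" using ab(1) by (simp add: bsingle_def split: if_splits)
  have b: "b \<in> bmons p (\<Sum>n\<in>T. p ^ n)" "fst b \<subseteq> {0,1,2} \<union> (\<lambda>n. n + 3) ` T"
    "card (fst b) = card T" "(\<Sum>n\<in>T - {2}. p ^ n) \<le> bwt_red p b"
    using foldr_alpha_tb_nonzeroD[OF p _ ab(2)] T2 fT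
    by (auto simp: sum_list_distinct_conv_sum_set sum_if_eq_sum_diff[OF fT])
  have ea: "a \<in> bmons p (zwt p e)" using a fe e0 by (simp add: bmons_def bwt_def)
  have u: "u = (fst b, \<lambda>k. e k + snd b k)" using ab(4) a by auto
  have "bwt_red p u = zwt p e + bwt_red p b"
    using bwt_red_mult[of "{}" "fst b" e "snd b" p] b(1) fe unfolding u by (simp add: bmons_def bwt_red_def)
  then show "wt p (fst x - {2}, snd x) \<le> bwt_red p u" using b(4) xe by (simp add: wt_eq_zwt)
  show "u \<in> bmons p (wt p x)"
    using bprod_in_bmons(1)[OF ea b(1)] ab(3,4) xe by (simp add: wt_eq_zwt add.commute)
  show "fst u \<subseteq> {0,1,2} \<union> (\<lambda>n. n + 3) ` fst x" "card (fst u) = card (fst x)"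
    using ab(4) a b(2,3) xe by auto
qed

lemma code_raise_image_code:
  assumes "S \<subseteq> {0,1,2}"
  shows "code_raise ` (S \<union> (\<lambda>n. n + 3) ` T) = S \<union> (\<lambda>n. n + 3) ` Suc ` T"
proof -
  have "code_raise ` S = S" using assms by (force simp: code_raise_def image_iff)
  moreover have "code_raise ` (\<lambda>n. n + 3) ` T = (\<lambda>n. n + 3) ` Suc ` T"
  proof -
    have "\<And>n. code_raise (n + 3) = Suc n + 3" by (simp add: code_raise_def)
    then show ?thesis by (simp add: image_image)
  qed
  ultimately show ?thesis by (simp add: image_Un)
qed

lemma braise_code:
  assumes "S \<subseteq> {0,1,2}"
  shows "braise p N r (S \<union> (\<lambda>n. n + 3) ` fst x, snd x)
       = (S \<union> (\<lambda>n. n + 3) ` fst (lift p N r x), snd (lift p N r x))"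
proof -
  have "snd (braise p N r (S \<union> (\<lambda>n. n + 3) ` fst x, snd x)) = snd (lift p N r x)"
    unfolding braise_def lift_def raise_def bwt_code[OF assms] snd_conv by (rule refl)
  then show ?thesis
    using code_raise_image_code[OF assms, of "fst x"] by (simp add: braise_def lift_def raise_def)
qed

lemma code_in_bmons:
  assumes "S \<subseteq> {0,1,2}" "x \<in> A_basis" "wt p x \<le> N"
  shows "(S \<union> (\<lambda>n. n + 3) ` fst x, snd x) \<in> bmons p N"
  using A_basisD[OF assms(2)] assms(3) bwt_code[OF assms(1), of p x] finite_subset[OF assms(1)]
  by (simp add: bmons_def)

lemma A_co_lift:
  assumes p: "0 < p" and x: "x \<in> A_basis" and x': "x' \<in> A_basis"
    and w: "wt p x \<le> N" and w': "wt p x' \<le> N" and S: "S \<subseteq> {0,1,2}"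
  shows "A_co p S (lift p N r x) (lift p N r x') = (A_co p S x x' :: 'k::field)"
  using transports_alpha_A[OF p x w, where 'k = 'k] code_in_bmons[OF S x' w']
  unfolding A_co_def transports_def braise_code[OF S, symmetric] by blast

text \<open>Every term of alpha(taubar_n) has weight p^n, except the term tau_2 (x) 1 of alpha(taubar_2).\<close>

lemma A_co_nonzeroD:
  assumes p: "0 < p" and x: "x \<in> A_basis" and S: "S \<subseteq> {0,1,2}"
    and nz: "A_co p S x c \<noteq> (0::'k::field)"
  shows "c \<in> A_basis" and "wt p c \<le> wt p x" and "fst c \<subseteq> fst x"
    and "card (fst x) = card S + card (fst c)"
    and "wt p (fst x - {2}, snd x) \<le> wt p (fst c - {2}, snd c)"
proof -
  let ?u = "(S \<union> (\<lambda>n. n + 3) ` fst c, snd c)"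
  have nz': "alpha_A p x ?u \<noteq> (0::'k)" using nz by (simp add: A_co_def)
  note u = alpha_A_nonzeroD[OF p x nz']
  show sub: "fst c \<subseteq> fst x" using u(2) by auto
  have fc: "finite (fst c)" using finite_subset[OF sub] A_basisD(1)[OF x] by blast
  show "c \<in> A_basis" using u(1) sub A_basisD(2)[OF x] fc by (auto simp: A_basis_def bmons_def)
  show "wt p c \<le> wt p x" using u(1) bwt_code[OF S, of p c] by (simp add: bmons_def)
  have "S \<inter> (\<lambda>n. n + 3) ` fst c = {}" "finite S" using S finite_subset by auto
  then show "card (fst x) = card S + card (fst c)"
    using u(3) fc by (simp add: card_Un_disjoint card_image)
  show "wt p (fst x - {2}, snd x) \<le> wt p (fst c - {2}, snd c)"
    using u(4) bwt_red_code[OF S, of p c] by simp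
qed

lemma code_decompose:
  obtains S T where "S \<subseteq> {0,1,2}" "U = S \<union> (\<lambda>n::nat. n + 3) ` T"
proof
  show "U \<inter> {0,1,2} \<subseteq> {0,1,2}" by blast
  show "U = U \<inter> {0,1,2} \<union> (\<lambda>n. n + 3) ` {n. n + 3 \<in> U}"
  proof (intro equalityI subsetI)
    fix x assume "x \<in> U"
    then show "x \<in> U \<inter> {0,1,2} \<union> (\<lambda>n. n + 3) ` {n. n + 3 \<in> U}"
      by (cases "x \<le> 2") (auto intro!: image_eqI[where x = "x - 3"])
  qed auto
qed

lemma A_co_lift_nonzeroD:
  assumes p: "0 < p" and x: "x \<in> A_basis" and w: "wt p x \<le> N" and S: "S \<subseteq> {0,1,2}"
    and nz: "A_co p S (lift p N r x) c \<noteq> (0::'k::field)"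
  obtains x' where "x' \<in> A_basis" "wt p x' \<le> wt p x" "c = lift p N r x'"
proof -
  note T = transports_alpha_A[OF p x w, of r, where 'k = 'k]
  let ?v = "(S \<union> (\<lambda>n. n + 3) ` fst c, snd c)"
  have "alpha_A p (lift p N r x) ?v \<noteq> (0::'k)" using nz by (simp add: A_co_def)
  then obtain u where u: "u \<in> bmons p N" "?v = braise p N r u" "alpha_A p x u \<noteq> (0::'k)"
    using T unfolding transports_def by metis
  obtain S' T' where S': "S' \<subseteq> {0,1,2}" "fst u = S' \<union> (\<lambda>n. n + 3) ` T'"
    by (rule code_decompose)
  note sp = alpha_A_nonzeroD[OF p x u(3)]
  define x' where "x' = (T', snd u)"
  have T'x: "T' \<subseteq> fst x" using sp(2) S' by auto
  have x': "x' \<in> A_basis"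
    using finite_subset[OF T'x] T'x A_basisD(1,2)[OF x] sp(1) by (auto simp: A_basis_def bmons_def x'_def)
  have ux: "u = (S' \<union> (\<lambda>n. n + 3) ` fst x', snd x')" using S' by (simp add: x'_def prod_eq_iff)
  have "wt p x' \<le> wt p x" using sp(1) bwt_code[OF S'(1), of p x'] ux by (simp add: bmons_def)
  moreover have eq: "?v = (S' \<union> (\<lambda>n. n + 3) ` fst (lift p N r x'), snd (lift p N r x'))"
    using u(2) braise_code[OF S'(1), of p N r x'] ux by simp
  have "fst c = fst (lift p N r x')"
  proof -
    have "n \<in> fst c \<longleftrightarrow> n \<in> fst (lift p N r x')" for n
    proof -
      have "n \<in> fst c \<longleftrightarrow> n + 3 \<in> fst ?v" using S by auto
      also have "\<dots> \<longleftrightarrow> n + 3 \<in> S' \<union> (\<lambda>n. n + 3) ` fst (lift p N r x')" using eq by simp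
      also have "\<dots> \<longleftrightarrow> n \<in> fst (lift p N r x')" using S'(1) by auto
      finally show ?thesis .
    qed
    then show ?thesis by blast
  qed
  then have "c = lift p N r x'" using eq by (simp add: prod_eq_iff)
  ultimately show thesis using that x' by blast
qed

lemma A_co_lift_eq_0:
  assumes p: "0 < p" and x: "x \<in> A_basis" and x': "x' \<in> A_basis" and w: "wt p x \<le> N"
    and w': "wt p x' \<le> N" and S: "S \<subseteq> {0,1,2}" and k: "k \<noteq> k'"
  shows "A_co p S (lift p N k x) (lift p N k' x') = (0::'k::field)"
proof (rule ccontr)
  assume "A_co p S (lift p N k x) (lift p N k' x') \<noteq> (0::'k)"
  then obtain x'' where x'': "x'' \<in> A_basis" "wt p x'' \<le> wt p x" "lift p N k' x' = lift p N k x''"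
    by (rule A_co_lift_nonzeroD[OF p x w S])
  have "k' = k" using lift_inject(2)[OF x' x''(1) w' _ x''(3)] x''(2) w by simp
  then show False using k by simp
qed

section \<open>The factor taubar_2\<close>

lemma osign_empty_left [simp]: "osign {} U = 1" and osign_empty_right [simp]: "osign U {} = 1"
  by (simp_all add: osign_def)

lemma osign_singleton_left: "osign {c} U = (-1) ^ card {u\<in>U. u < c}"
proof -
  have "{(u, v). u \<in> {c} \<and> v \<in> U \<and> v < u} = Pair c ` {u\<in>U. u < c}" by auto
  then show ?thesis unfolding osign_def by (simp add: card_image inj_on_def)
qed

lemma sorted_list_of_set_insert_less:
  assumes "finite T" "\<forall>n\<in>T. a < n"
  shows "sorted_list_of_set (insert a T) = a # sorted_list_of_set (T::'a::linorder set)"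
proof -
  have "Min (insert a T) = a" using assms by (auto intro!: Min_eqI)
  moreover have "insert a T - {a} = T" using assms by auto
  ultimately show ?thesis using sorted_list_of_set_nonempty[of "insert a T"] assms(1) by simp
qed

lemma bmul_bsingle_zeta:
  "bmul (bsingle ({}, e) (1::'k::field)) F (U, e')
     = (if \<forall>k. e k \<le> e' k then F (U, \<lambda>k. e' k - e k) else 0)"
proof -
  let ?b = "(U, \<lambda>k. e' k - e k)"
  have X: "bfactors (bsingle ({}, e) 1) F (U, e')
      = (if (\<forall>k. e k \<le> e' k) \<and> F ?b \<noteq> 0 then {(({}, e), ?b)} else {})"
  proof -
    have "z \<in> bfactors (bsingle ({}, e) 1) F (U, e') \<longleftrightarrow> z = (({}, e), ?b) \<and> (\<forall>k. e k \<le> e' k) \<and> F ?b \<noteq> 0"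
      for z
    proof
      assume z: "z \<in> bfactors (bsingle ({}, e) 1) F (U, e')"
      obtain a b where ab: "z = (a, b)" by (cases z)
      have a: "a = ({}, e)" using z ab by (auto simp: bfactors_def bsingle_def split: if_splits)
      have "fst b = U" "(\<lambda>k. e k + snd b k) = e'" "F b \<noteq> 0" using z ab a by (simp_all add: bfactors_def)
      then show "z = (({}, e), ?b) \<and> (\<forall>k. e k \<le> e' k) \<and> F ?b \<noteq> 0"
        using ab a by (auto simp: prod_eq_iff)
    qed (auto simp: bfactors_def bsingle_def fun_eq_iff)
    then show ?thesis by auto
  qed
  show ?thesis unfolding bmul_eq_sum_bfactors X by (simp add: bsingle_def)
qed

lemma bmul_alpha_tb_2:
  assumes U: "5 \<notin> U" and R: "\<forall>b. R b \<noteq> 0 \<longrightarrow> 5 \<notin> fst b"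
  shows "bmul (alpha_tb p 2) R (insert 5 U, e)
       = (-1) ^ card {c\<in>U. c < (5::nat)} * (R (U, e) :: 'k::field)"
proof -
  have tb: "alpha_tb p 2 ({5}, \<lambda>_. 0) = (1::'k)" unfolding alpha_tb_eq bsingle_def by simp
  have X: "bfactors (alpha_tb p 2) R (insert 5 U, e)
      = (if R (U, e) \<noteq> 0 then {(({5}, \<lambda>_. 0), (U, e))} else {})"
  proof -
    have "z \<in> bfactors (alpha_tb p 2) R (insert 5 U, e) \<longleftrightarrow> z = (({5}, \<lambda>_. 0), (U, e)) \<and> R (U, e) \<noteq> 0"
      for z
    proof
      assume z: "z \<in> bfactors (alpha_tb p 2) R (insert 5 U, e)"
      obtain a b where ab: "z = (a, b)" by (cases z)
      have nz: "alpha_tb p 2 a \<noteq> (0::'k)" and Rb: "R b \<noteq> 0" and d: "fst a \<inter> fst b = {}"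
        and fu: "fst a \<union> fst b = insert 5 U" and su: "(\<lambda>k. snd a k + snd b k) = e"
        using z ab by (auto simp: bfactors_def)
      have "5 \<notin> fst b" using R Rb by blast
      then have "5 \<in> fst a" using fu by blast
      then have a: "a = ({5}, \<lambda>_. 0)"
        using alpha_tb_nonzeroD[OF nz] by auto
      have "insert 5 (fst b) = insert 5 U" using fu unfolding a by simp
      then have "fst b = U" using \<open>5 \<notin> fst b\<close> U by (simp add: insert_ident)
      moreover have "snd b = e" using su a by (simp add: fun_eq_iff)
      ultimately have "b = (U, e)" by (simp add: prod_eq_iff)
      then show "z = (({5}, \<lambda>_. 0), (U, e)) \<and> R (U, e) \<noteq> 0" using ab a Rb by simp
    qed (use U tb in \<open>auto simp: bfactors_def\<close>)
    then show ?thesis by auto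
  qed
  show ?thesis
    unfolding bmul_eq_sum_bfactors X by (simp add: tb osign_singleton_left)
qed

text \<open>On terms containing taubar_2 only the summand 1 (x) taubar_2 of alpha(taubar_2) contributes;
  the sign comes from moving it past the tau_l of the other factors.\<close>

lemma alpha_A_taubar2:
  assumes p: "0 < p" and x: "x \<in> A_basis" and x2: "2 \<in> fst x" and U: "5 \<notin> U"
  shows "alpha_A p x (insert 5 U, e)
       = (-1) ^ card {c\<in>U. c < (5::nat)} * (alpha_A p (fst x - {2}, snd x) (U, e) :: 'k::field)"
proof -
  let ?T = "fst x - {2}"
  have fT: "finite ?T" using A_basisD(1)[OF x] by simp
  have T2: "\<forall>n\<in>?T. 2 < n" using A_basisD(2)[OF x] by force
  have "insert 2 ?T = fst x" using x2 by auto
  then have sl: "sorted_list_of_set (fst x) = 2 # sorted_list_of_set ?T"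
    using sorted_list_of_set_insert_less[OF fT T2] by simp
  define R where "R = foldr bmul (map (alpha_tb p) (sorted_list_of_set ?T)) (bsingle ({}, \<lambda>_. 0) (1::'k))"
  have R5: "\<forall>b. R b \<noteq> 0 \<longrightarrow> 5 \<notin> fst b"
  proof (intro allI impI)
    fix b assume "R b \<noteq> 0"
    moreover have "\<forall>n\<in>set (sorted_list_of_set ?T). 2 \<le> n" using T2 fT by (simp add: less_imp_le)
    ultimately have "fst b \<subseteq> {0,1,2} \<union> (\<lambda>n. n + 3) ` set (sorted_list_of_set ?T)"
      using foldr_alpha_tb_nonzeroD[OF p] unfolding R_def by blast
    then show "5 \<notin> fst b" using fT by auto
  qed
  have ax: "alpha_A p x = bmul (bsingle ({}, snd x) (1::'k)) (bmul (alpha_tb p 2) R)"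
    unfolding alpha_A_def sl R_def by simp
  have aT: "alpha_A p (?T, snd x) = bmul (bsingle ({}, snd x) (1::'k)) R"
    unfolding alpha_A_def R_def by simp
  show ?thesis
    unfolding ax aT bmul_bsingle_zeta bmul_alpha_tb_2[OF U R5] by simp
qed

lemma A_co_taubar2:
  assumes p: "0 < p" and b: "b \<in> A_basis" and b2: "2 \<in> fst b" and S: "S \<subseteq> {0,1,2}"
    and W3: "\<forall>n\<in>fst W. 3 \<le> n"
  shows "A_co p S b (insert 2 (fst W), snd W) = (-1) ^ card S * (A_co p S (fst b - {2}, snd b) W :: 'k::field)"
proof -
  let ?U = "S \<union> (\<lambda>n. n + 3) ` fst W"
  have U5: "5 \<notin> ?U" using S W3 by force
  have e: "S \<union> (\<lambda>n. n + 3) ` insert 2 (fst W) = insert 5 ?U" by auto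
  have c: "{c\<in>?U. c < 5} = S" using S W3 by force
  show ?thesis
    unfolding A_co_def fst_conv snd_conv e alpha_A_taubar2[OF p b b2 U5] c ..
qed

lemma A_co_taubar2_eq_0:
  assumes "0 < p" "b \<in> A_basis" "2 \<notin> fst b" "S \<subseteq> {0,1,2}" "2 \<in> fst c"
  shows "A_co p S b c = (0::'k::field)"
  using A_co_nonzeroD(3)[OF assms(1,2,4)] assms(3,5) by blast

section \<open>The bases of the four comodules\<close>

definition zeta1 :: "nat \<Rightarrow> amon" where
  "zeta1 k = ({}, \<lambda>n. if n = 1 then k else 0)"

definition ell_basis :: "nat \<Rightarrow> nat \<Rightarrow> amon set" where
  "ell_basis p n = {m \<in> A_basis. wt p m \<le> p * n}"

definition Q_basis :: "nat \<Rightarrow> nat \<Rightarrow> amon set" where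
  "Q_basis p j = {m \<in> A_basis. wt p (fst m - {2}, snd m) < p * (p * j)}"

lemma basis_ell [simp]: "basis (ell p n) = ell_basis p n"
  by (simp add: ell_def ell_basis_def)

lemma ell_basisD: "m \<in> ell_basis p n \<Longrightarrow> m \<in> A_basis" "m \<in> ell_basis p n \<Longrightarrow> wt p m \<le> p * n"
  by (simp_all add: ell_basis_def)

lemma A_co_nonzero_ell_basis:
  assumes "0 < p" "S \<subseteq> {0,1,2}" "y \<in> ell_basis p n" "A_co p S y c \<noteq> (0::'k::field)"
  shows "c \<in> ell_basis p n"
  using A_co_nonzeroD(1,2)[OF assms(1) ell_basisD(1)[OF assms(3)] assms(2,4)] ell_basisD(2)[OF assms(3)]
  by (simp add: ell_basis_def)

lemma A_co_nonzero_Q_basis: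
  assumes "0 < p" "S \<subseteq> {0,1,2}" "b \<in> A_basis" "d \<in> Q_basis p j" "A_co p S b d \<noteq> (0::'k::field)"
  shows "b \<in> Q_basis p j"
  using A_co_nonzeroD(5)[OF assms(1,3,2,5)] assms(3,4) by (simp add: Q_basis_def)

lemma bcomod_simps [simp]:
  "basis (susp n M) = basis M" "bdeg (susp n M) b = bdeg M b + n" "bco (susp n M) = bco M"
  "basis (tensor p M1 M2) = basis M1 \<times> basis M2"
  "bdeg (tensor p M1 M2) (x, a) = bdeg M1 x + bdeg M2 a"
  "basis (dsum_susp K f M) = K \<times> basis M" "bdeg (dsum_susp K f M) (k, y) = f k + bdeg M y"
  "bco (dsum_susp K f M) S (k, y) (k', c) = (if k = k' then bco M S y c else 0)"
  "bdeg (ell p m) = A_deg p" "bco (ell p m) = A_co p" "bdeg (Qquot p r) = A_deg p"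
  by (simp_all add: susp_def tensor_def dsum_susp_def ell_def Qquot_def)

lemma
  assumes "r + 1 = p * j"
  shows basis_Qquot: "basis (Qquot p r) = Q_basis p j"
    and bco_Qquot: "bco (Qquot p r) S b d = (if d \<in> Q_basis p j then A_co p S b d else 0)"
  using assms by (simp_all add: Qquot_def Q_basis_def)

lemma
  shows zeta1_in_A_basis: "zeta1 k \<in> A_basis"
    and wt_zeta1: "wt p (zeta1 k) = k * p"
    and A_deg_zeta1: "A_deg p (zeta1 k) = qq p * int k"
proof -
  have s: "{n::nat. (if n = 1 then k else 0) \<noteq> 0} \<subseteq> {1}" by auto
  then have "finite {n::nat. (if n = 1 then k else 0) \<noteq> 0}" by (rule finite_subset) simp
  then show "zeta1 k \<in> A_basis" by (simp add: zeta1_def A_basis_def)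
  have "zwt p (\<lambda>n. if n = 1 then k else 0) = (\<Sum>n\<in>{1}. (if n = 1 then k else 0) * p ^ n)"
    by (rule zwt_eq_sum_superset) (use s in auto)
  then show "wt p (zeta1 k) = k * p" by (simp add: wt_eq_zwt zeta1_def)
  have "(\<Sum>n\<in>{n::nat. (if n = 1 then k else 0) \<noteq> 0}. int (if n = 1 then k else 0) * 2 * (int p ^ n - 1))
        = int k * 2 * (int p - 1)"
  proof (cases "k = 0")
    case False
    then have seq: "{n::nat. (if n = 1 then k else 0) \<noteq> 0} = {1}" by auto
    show ?thesis unfolding seq by simp
  qed simp
  then show "A_deg p (zeta1 k) = qq p * int k"
    unfolding A_deg_def qq_def zeta1_def fst_conv snd_conv by (simp add: algebra_simps)
qed

text \<open>Every generator other than zeta_1 has weight at least p^2.\<close>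

lemma ell_basis_small:
  assumes a: "a \<in> ell_basis p i" and i: "i < p" and p: "2 \<le> p"
  shows "a = zeta1 (snd a 1)" and "snd a 1 \<le> i"
proof -
  have aA: "a \<in> A_basis" and w: "wt p a \<le> p * i" using a by (auto simp: ell_basis_def)
  have "p * i < p * p" using p i by simp
  then have lt: "wt p a < p ^ 2" using le_less_trans[OF w] by (simp add: power2_eq_square)
  have fa: "fst a = {}"
  proof (rule ccontr)
    assume "fst a \<noteq> {}"
    then obtain n where n: "n \<in> fst a" by blast
    have "p ^ 2 \<le> p ^ n" using A_basisD(2)[OF aA] n p by (intro power_increasing) auto
    also have "\<dots> \<le> (\<Sum>n\<in>fst a. p ^ n)" using A_basisD(1)[OF aA] n by (intro member_le_sum) auto
    also have "\<dots> \<le> wt p a" by (simp add: wt_eq_zwt)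
    finally show False using lt by simp
  qed
  have sn: "snd a k = 0" if "k \<noteq> 1" for k
  proof (rule ccontr)
    assume nz: "snd a k \<noteq> 0"
    then have k: "k \<ge> 2" using that A_basisD(4)[OF aA] by (cases k) auto
    have "p ^ 2 \<le> p ^ k" using k p by (intro power_increasing) auto
    also have "\<dots> \<le> snd a k * p ^ k" using nz by simp
    also have "\<dots> \<le> zwt p (snd a)" by (rule zwt_member_le[OF A_basisD(3)[OF aA]])
    also have "\<dots> \<le> wt p a" by (simp add: wt_eq_zwt)
    finally show False using lt by simp
  qed
  show "a = zeta1 (snd a 1)" using fa sn by (simp add: zeta1_def prod_eq_iff fun_eq_iff)
  have "snd a 1 * p \<le> wt p a"
    using zwt_member_le[OF A_basisD(3)[OF aA], of 1 p] by (simp add: wt_eq_zwt)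
  then have "p * snd a 1 \<le> p * i" using le_trans[OF _ w] by (simp add: mult.commute)
  then show "snd a 1 \<le> i" using p by simp
qed

lemma A_co_zeta:
  assumes fa: "fst a = {}"
  shows "A_co p S a a' = (if S \<union> (\<lambda>n. n + 3) ` fst a' = {} \<and> snd a' = snd a then 1 else (0::'k::field))"
proof -
  have al: "alpha_A p a = bmul (bsingle ({}, snd a) (1::'k)) (bsingle ({}, \<lambda>_. 0) 1)"
    unfolding alpha_A_def fa by simp
  have "bmul (bsingle ({}, snd a) (1::'k)) (bsingle ({}, \<lambda>_. 0) 1) (U, e)
        = (if U = {} \<and> e = snd a then 1 else 0)" for U e
  proof -
    have iff: "((\<forall>k. snd a k \<le> e k) \<and> (U, \<lambda>k. e k - snd a k) = ({}, \<lambda>_. 0)) = (U = {} \<and> e = snd a)"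
      by (auto simp: fun_eq_iff intro: le_antisym)
    show ?thesis unfolding bmul_bsingle_zeta iff[symmetric] by (simp add: bsingle_def)
  qed
  then show ?thesis unfolding A_co_def al by simp
qed

lemma bco_tensor_zeta:
  assumes a: "fst a = {}" and S: "S \<subseteq> {0,1,2}"
  shows "bco (tensor p M (ell p i)) S (x, a) (x', a') = bco M S x x' * (if a' = a then 1 else (0::'k::field))"
proof -
  define t where "t S1 = osign S1 (S - S1)
             * (if even ((bdeg M x - taudeg p S1) * int (card (S - S1))) then 1 else -1)
             * bco M S1 x x' * (bco (ell p i) (S - S1) a a' :: 'k)" for S1
  have "t S1 = (if S1 = S then bco M S x x' * (if a' = a then 1 else 0) else 0)" if "S1 \<in> Pow S" for S1
  proof (cases "S1 = S")
    case True
    have "bco (ell p i) {} a a' = (if a' = a then 1 else (0::'k))"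
      using A_co_zeta[OF a, of p "{}" a'] a by (auto simp: prod_eq_iff)
    then show ?thesis using True by (simp add: t_def)
  next
    case False
    then have "S - S1 \<noteq> {}" using that by auto
    then have "bco (ell p i) (S - S1) a a' = (0::'k)" using A_co_zeta[OF a, of p "S - S1" a'] by simp
    then show ?thesis using False by (simp add: t_def)
  qed
  then have "(\<Sum>S1\<in>Pow S. t S1) = (\<Sum>S1\<in>Pow S. if S1 = S then bco M S x x' * (if a' = a then 1 else 0) else 0)"
    by (intro sum.cong) auto
  also have "\<dots> = bco M S x x' * (if a' = a then 1 else 0)"
    using finite_subset[OF S] by (simp add: sum.delta')
  finally have "(\<Sum>S1\<in>Pow S. t S1) = bco M S x x' * (if a' = a then 1 else 0)" .
  then show ?thesis unfolding tensor_def t_def by simp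
qed

text \<open>Only the zeta_1-exponent of the second factor is read: for i < p the basis of ell_i consists
  of the powers of zeta_1.\<close>

definition tensor_embed :: "nat \<Rightarrow> nat \<Rightarrow> amon \<times> amon \<Rightarrow> amon" where
  "tensor_embed p j = (\<lambda>(x, a). lift p (p * j) (snd a 1) x)"

lemma tensor_embed_in_ell_basis:
  assumes p: "2 \<le> p" and i: "i < p" and x: "x \<in> ell_basis p j" and a: "a \<in> ell_basis p i"
  shows "tensor_embed p j (x, a) \<in> ell_basis p (p * j + i) - Q_basis p j"
proof -
  note W = lift_in_A_basis[OF ell_basisD[OF x]] lift_indices_ge3[OF ell_basisD[OF x]]
    wt_lift[OF ell_basisD[OF x]]
  let ?m = "lift p (p * j) (snd a 1) x"
  have "p * (snd a 1 + p * j) \<le> p * (p * j + i)" using ell_basis_small(2)[OF a i p] by simp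
  then have "?m \<in> ell_basis p (p * j + i)" using W(1,3) by (simp add: ell_basis_def)
  moreover have "2 \<notin> fst ?m" using W(2) by force
  then have "?m \<notin> Q_basis p j" using W(3) by (simp add: Q_basis_def)
  ultimately show ?thesis by (simp add: tensor_embed_def)
qed

text \<open>A monomial of weight \<le> p(pj + i) outside Q_basis has no taubar_2 (as i < p)
  and weight p(pj + k) with k \<le> i, so it is the lift of a monomial of ell_j times zeta_1^k.\<close>

lemma ell_basis_diff_Q_basis_imp_tensor_embed:
  assumes p: "2 \<le> p" and i: "i < p" and m: "m \<in> ell_basis p (p * j + i) - Q_basis p j"
  shows "m \<in> tensor_embed p j ` (ell_basis p j \<times> ell_basis p i)"
proof -
  have mA: "m \<in> A_basis" and wm: "wt p m \<le> p * (p * j + i)"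
    and nq: "\<not> wt p (fst m - {2}, snd m) < p * (p * j)"
    using m by (auto simp: ell_basis_def Q_basis_def)
  have n2: "2 \<notin> fst m"
  proof
    assume "2 \<in> fst m"
    then have "wt p m = p * p + wt p (fst m - {2}, snd m)"
      using A_basisD(1)[OF mA] by (simp add: wt_def sum.remove power2_eq_square)
    then have "p * p + p * (p * j) \<le> p * (p * j + i)" using nq wm by simp
    then show False using p i by (simp add: algebra_simps)
  qed
  have m3: "\<forall>n\<in>fst m. 3 \<le> n"
  proof
    fix n assume "n \<in> fst m"
    then have "2 \<le> n" "n \<noteq> 2" using A_basisD(2)[OF mA] n2 by auto
    then show "3 \<le> n" by simp
  qed
  obtain s where s: "wt p m = p * s" using dvd_wt[OF mA, of p] by (auto elim: dvdE)
  have "p * j \<le> s" "s \<le> p * j + i" using wm nq n2 s p by simp_all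
  then obtain k where k: "s = p * j + k" "k \<le> i" by (metis add_le_cancel_left le_Suc_ex)
  have "0 < p" "wt p m = p * (p * j + k)" "k < p" using p s k i by simp_all
  then obtain y where y: "y \<in> A_basis" "wt p y \<le> p * j" "m = lift p (p * j) k y"
    using mA m3 by (metis lift_surj)
  have "(y, zeta1 k) \<in> ell_basis p j \<times> ell_basis p i"
    using y zeta1_in_A_basis wt_zeta1[of p k] k(2) by (simp add: ell_basis_def mult.commute)
  moreover have "m = tensor_embed p j (y, zeta1 k)" using y(3) by (simp add: tensor_embed_def zeta1_def)
  ultimately show ?thesis by blast
qed

lemma image_tensor_embed:
  assumes "2 \<le> p" "i < p"
  shows "tensor_embed p j ` (ell_basis p j \<times> ell_basis p i) = ell_basis p (p * j + i) - Q_basis p j"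
  using tensor_embed_in_ell_basis[OF assms] ell_basis_diff_Q_basis_imp_tensor_embed[OF assms] by auto

lemma inj_on_tensor_embed:
  assumes p: "2 \<le> p" and i: "i < p"
  shows "inj_on (tensor_embed p j) (ell_basis p j \<times> ell_basis p i)"
proof (rule inj_onI, clarify)
  fix x a x' a' assume x: "x \<in> ell_basis p j" "a \<in> ell_basis p i"
    and x': "x' \<in> ell_basis p j" "a' \<in> ell_basis p i"
    and eq: "tensor_embed p j (x, a) = tensor_embed p j (x', a')"
  note inj = lift_inject[OF ell_basisD(1)[OF x(1)] ell_basisD(1)[OF x'(1)]
    ell_basisD(2)[OF x(1)] ell_basisD(2)[OF x'(1)] eq[unfolded tensor_embed_def, simplified]]
  show "x = x' \<and> a = a'"
    using inj ell_basis_small(1)[OF x(2) i p] ell_basis_small(1)[OF x'(2) i p] by (metis One_nat_def)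
qed

lemma A_deg_tensor_embed:
  assumes p: "2 \<le> p" and i: "i < p" and x: "x \<in> ell_basis p j" and a: "a \<in> ell_basis p i"
  shows "A_deg p (tensor_embed p j (x, a)) = A_deg p x + A_deg p a + qq p * int p * int j"
proof -
  have "A_deg p a = qq p * int (snd a 1)" using A_deg_zeta1 ell_basis_small(1)[OF a i p] by metis
  then show ?thesis
    using A_deg_lift[OF ell_basisD[OF x], of "snd a 1"] by (simp add: tensor_embed_def algebra_simps)
qed

lemma A_co_tensor_embed:
  assumes p: "2 \<le> p" and i: "i < p" and S: "S \<subseteq> {0,1,2}"
    and b: "b \<in> ell_basis p j \<times> ell_basis p i" and b': "b' \<in> ell_basis p j \<times> ell_basis p i"
  shows "A_co p S (tensor_embed p j b) (tensor_embed p j b')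
       = (bco (tensor p (ell p j) (ell p i)) S b b' :: 'k::field)"
proof -
  obtain x a x' a' where e: "b = (x, a)" "b' = (x', a')" by (cases b, cases b')
  have x: "x \<in> A_basis" "wt p x \<le> p * j" "x' \<in> A_basis" "wt p x' \<le> p * j"
    and a: "a \<in> ell_basis p i" "a' \<in> ell_basis p i"
    using b b' e by (auto simp: ell_basis_def)
  have "fst a = {}" using ell_basis_small(1)[OF a(1) i p] by (metis fst_conv zeta1_def)
  then have t: "bco (tensor p (ell p j) (ell p i)) S (x, a) (x', a') = A_co p S x x' * (if a' = a then 1 else (0::'k))"
    using bco_tensor_zeta[OF _ S, of a p "ell p j" i x x' a'] by simp
  show ?thesis
  proof (cases "a' = a")
    case True
    then show ?thesis using t A_co_lift[OF _ x(1,3,2,4) S] p e by (simp add: tensor_embed_def)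
  next
    case False
    then have "snd a 1 \<noteq> snd a' 1" using ell_basis_small(1)[OF a(1) i p] ell_basis_small(1)[OF a(2) i p] by metis
    then show ?thesis using t A_co_lift_eq_0[OF _ x(1,3,2,4) S] False p e by (simp add: tensor_embed_def)
  qed
qed

lemma A_co_tensor_embed_eq_0:
  assumes p: "2 \<le> p" and S: "S \<subseteq> {0,1,2}" and b: "b \<in> ell_basis p j \<times> ell_basis p i"
    and c: "c \<notin> tensor_embed p j ` (ell_basis p j \<times> ell_basis p i)"
  shows "A_co p S (tensor_embed p j b) c = (0::'k::field)"
proof (rule ccontr)
  obtain x a where e: "b = (x, a)" by (cases b)
  have x: "x \<in> A_basis" "wt p x \<le> p * j" using b e by (auto simp: ell_basis_def)
  assume "A_co p S (tensor_embed p j b) c \<noteq> (0::'k)"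
  then have "A_co p S (lift p (p * j) (snd a 1) x) c \<noteq> (0::'k)" by (simp add: tensor_embed_def e)
  moreover have "0 < p" using p by simp
  ultimately obtain x' where x': "x' \<in> A_basis" "wt p x' \<le> wt p x" "c = lift p (p * j) (snd a 1) x'"
    using A_co_lift_nonzeroD[OF _ x S] by blast
  then have "(x', a) \<in> ell_basis p j \<times> ell_basis p i" "c = tensor_embed p j (x', a)"
    using b e x by (auto simp: ell_basis_def tensor_embed_def)
  then show False using c by blast
qed

definition dsum_basis :: "nat \<Rightarrow> nat \<Rightarrow> nat \<Rightarrow> (nat \<times> amon) set" where
  "dsum_basis p j i = {i + 1..p - 1} \<times> ell_basis p (j - 1)"

definition sum_embed :: "nat \<Rightarrow> nat \<Rightarrow> nat \<times> amon \<Rightarrow> amon" where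
  "sum_embed p j = (\<lambda>(k, y). (insert 2 (fst (lift p (p * (j - 1)) k y)), snd (lift p (p * (j - 1)) k y)))"

text \<open>The sign compensates for moving taubar_2 past the tau_l in the coaction.\<close>

definition tb_sign :: "nat \<times> amon \<Rightarrow> 'k::field" where
  "tb_sign d = (-1) ^ card (fst (snd d))"

lemma sum_embed_tb2:
  assumes "d \<in> dsum_basis p j i"
  shows "2 \<in> fst (sum_embed p j d)" and "2 \<notin> fst (lift p (p * (j - 1)) (fst d) (snd d))"
    and "(fst (sum_embed p j d) - {2}, snd (sum_embed p j d)) = lift p (p * (j - 1)) (fst d) (snd d)"
proof -
  have y: "snd d \<in> A_basis" "wt p (snd d) \<le> p * (j - 1)" using assms by (auto simp: dsum_basis_def ell_basis_def)
  show n: "2 \<notin> fst (lift p (p * (j - 1)) (fst d) (snd d))" using lift_indices_ge3[OF y, of "fst d"] by force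
  show "2 \<in> fst (sum_embed p j d)" by (simp add: sum_embed_def case_prod_beta)
  show "(fst (sum_embed p j d) - {2}, snd (sum_embed p j d)) = lift p (p * (j - 1)) (fst d) (snd d)"
    using n by (simp add: sum_embed_def case_prod_beta)
qed

lemma sum_embed_in_A_basis:
  assumes "d \<in> dsum_basis p j i"
  shows "sum_embed p j d \<in> A_basis"
proof -
  have "snd d \<in> A_basis" "wt p (snd d) \<le> p * (j - 1)" using assms by (auto simp: dsum_basis_def ell_basis_def)
  from A_basisD[OF lift_in_A_basis[OF this, of "fst d"]] show ?thesis
    by (auto simp: A_basis_def sum_embed_def case_prod_beta)
qed

lemma
  assumes p: "2 \<le> p" and j: "1 \<le> j" and d: "d \<in> dsum_basis p j i"
  shows sum_embed_in_Q_basis: "sum_embed p j d \<in> Q_basis p j - ell_basis p (p * j + i)"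
    and A_deg_sum_embed: "A_deg p (sum_embed p j d) = A_deg p (snd d) + phi p j (fst d)"
proof -
  obtain k y where kyd: "d = (k, y)" by (cases d)
  have k: "i < k" "k < p" and y: "y \<in> A_basis" "wt p y \<le> p * (j - 1)"
    using d kyd p by (auto simp: dsum_basis_def ell_basis_def)
  define W where "W = lift p (p * (j - 1)) k y"
  have WA: "W \<in> A_basis" and wW: "wt p W = p * (k + p * (j - 1))"
    using lift_in_A_basis[OF y] wt_lift[OF y] by (simp_all add: W_def)
  have n2: "2 \<notin> fst W" and r: "(fst (sum_embed p j d) - {2}, snd (sum_embed p j d)) = W"
    using sum_embed_tb2[OF d] by (simp_all add: W_def kyd)
  have ps: "sum_embed p j d = (insert 2 (fst W), snd W)" by (simp add: sum_embed_def kyd W_def)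
  have fW: "finite (fst W)" using A_basisD(1)[OF WA] .
  obtain j' where j': "j = Suc j'" using j by (cases j) auto
  have "sum_embed p j d \<in> A_basis" using A_basisD[OF WA] ps by (auto simp: A_basis_def)
  moreover have "p * (k + p * (j - 1)) < p * (p * j)" using k p j' by simp
  moreover have "p * (p * j + i) < p ^ 2 + p * (k + p * (j - 1))"
    using k p j' by (simp add: power2_eq_square algebra_simps)
  moreover have "wt p (sum_embed p j d) = p ^ 2 + wt p W" using fW n2 ps by (simp add: wt_def)
  ultimately show "sum_embed p j d \<in> Q_basis p j - ell_basis p (p * j + i)"
    using r wW by (simp add: Q_basis_def ell_basis_def)
  have "A_deg p (sum_embed p j d) = 2 * int p ^ 2 - 1 + A_deg p W" using fW n2 ps by (simp add: A_deg_def)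
  then have D: "A_deg p (sum_embed p j d) = 2 * int p ^ 2 - 1 + A_deg p y + qq p * int (k + p * (j - 1))"
    using A_deg_lift[OF y, of k] by (simp add: W_def)
  have e: "int (k + p * (j - 1)) = int p * (int j - 1) + int k" using j' by (simp add: algebra_simps)
  show "A_deg p (sum_embed p j d) = A_deg p (snd d) + phi p j (fst d)"
    unfolding D e by (simp add: phi_def kyd)
qed

lemma Q_basis_diff_ell_basis_imp_sum_embed:
  assumes p: "2 \<le> p" and j: "1 \<le> j" and i: "i < p" and b: "b \<in> Q_basis p j - ell_basis p (p * j + i)"
  shows "b \<in> sum_embed p j ` dsum_basis p j i"
proof -
  obtain j' where j': "j = Suc j'" using j by (cases j) auto
  have bA: "b \<in> A_basis" and bq: "wt p (fst b - {2}, snd b) < p * (p * j)"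
    and bl: "\<not> wt p b \<le> p * (p * j + i)" using b by (auto simp: Q_basis_def ell_basis_def)
  have b2: "2 \<in> fst b"
  proof (rule ccontr)
    assume "2 \<notin> fst b"
    then have "wt p b < p * (p * j)" using bq by simp
    moreover have "p * (p * j) \<le> p * (p * j + i)" by simp
    ultimately show False using bl by linarith
  qed
  define m where "m = (fst b - {2}, snd b)"
  have mA: "m \<in> A_basis" and m3: "\<forall>n\<in>fst m. 3 \<le> n"
    using A_basisD[OF bA] by (force simp: m_def A_basis_def)+
  have wb: "wt p b = p * p + wt p m"
    using b2 A_basisD(1)[OF bA] by (simp add: m_def wt_def sum.remove power2_eq_square)
  obtain s where s: "wt p m = p * s" using dvd_wt[OF mA, of p] by (auto elim: dvdE)
  have "s < p * j" using bq s p by (simp add: m_def)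
  moreover have "p * (p * j + i) < p * (p + s)" using bl wb s by (simp add: algebra_simps)
  then have "p * j + i < p + s" using p by simp
  ultimately have "p * j' + i < s" "s < p * j' + p" using j' by simp_all
  define k where "k = s - p * j'"
  have ks: "s = p * j' + k" and k: "i < k" "k < p"
    using \<open>p * j' + i < s\<close> \<open>s < p * j' + p\<close> by (simp_all add: k_def)
  have "0 < p" "wt p m = p * (p * j' + k)" using p s ks by simp_all
  then obtain y where y: "y \<in> A_basis" "wt p y \<le> p * j'" "m = lift p (p * j') k y"
    using mA m3 k(2) by (metis lift_surj)
  have "fst b = insert 2 (fst m)" "snd b = snd m" using b2 by (auto simp: m_def)
  then have "b = sum_embed p j (k, y)" using y(3) j' by (simp add: sum_embed_def prod_eq_iff)
  moreover have "(k, y) \<in> dsum_basis p j i" using k y j' by (auto simp: dsum_basis_def ell_basis_def)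
  ultimately show ?thesis by blast
qed

lemma image_sum_embed:
  assumes "2 \<le> p" "1 \<le> j" "i < p"
  shows "sum_embed p j ` dsum_basis p j i = Q_basis p j - ell_basis p (p * j + i)"
  using sum_embed_in_Q_basis[OF assms(1,2)] Q_basis_diff_ell_basis_imp_sum_embed[OF assms] by blast

lemma inj_on_sum_embed: "inj_on (sum_embed p j) (dsum_basis p j i)"
proof (rule inj_onI)
  fix d d' assume d: "d \<in> dsum_basis p j i" and d': "d' \<in> dsum_basis p j i"
    and eq: "sum_embed p j d = sum_embed p j d'"
  have y: "snd d \<in> A_basis" "wt p (snd d) \<le> p * (j - 1)" "snd d' \<in> A_basis" "wt p (snd d') \<le> p * (j - 1)"
    using d d' by (auto simp: dsum_basis_def ell_basis_def)
  have "lift p (p * (j - 1)) (fst d) (snd d) = lift p (p * (j - 1)) (fst d') (snd d')"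
    using sum_embed_tb2(3)[OF d] sum_embed_tb2(3)[OF d'] eq by metis
  then show "d = d'" using lift_inject[OF y(1,3,2,4)] by (simp add: prod_eq_iff)
qed

lemma A_co_sum_embed:
  assumes p: "0 < p" and S: "S \<subseteq> {0,1,2}" and d: "d \<in> dsum_basis p j i" and d': "d' \<in> dsum_basis p j i"
  shows "tb_sign d' * A_co p S (sum_embed p j d) (sum_embed p j d')
       = tb_sign d * (if fst d = fst d' then A_co p S (snd d) (snd d') else (0::'k::field))"
proof -
  let ?N = "p * (j - 1)"
  obtain k y k' y' where e: "d = (k, y)" "d' = (k', y')" by (cases d, cases d')
  have y: "y \<in> A_basis" "y' \<in> A_basis" "wt p y \<le> ?N" "wt p y' \<le> ?N"
    using d d' e by (auto simp: dsum_basis_def ell_basis_def)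
  have split: "A_co p S (sum_embed p j d) (sum_embed p j d')
      = (-1) ^ card S * (A_co p S (lift p ?N k y) (lift p ?N k' y') :: 'k)"
  proof -
    have "sum_embed p j d' = (insert 2 (fst (lift p ?N k' y')), snd (lift p ?N k' y'))"
      by (simp add: sum_embed_def e)
    then show ?thesis
      using A_co_taubar2[OF p sum_embed_in_A_basis[OF d] sum_embed_tb2(1)[OF d] S lift_indices_ge3[OF y(2,4)]]
        sum_embed_tb2(3)[OF d] e by simp
  qed
  have sign: "(-1) ^ card (fst y') * (-1) ^ card S * A_co p S y y' = (-1) ^ card (fst y) * (A_co p S y y' :: 'k)"
  proof (cases "A_co p S y y' = (0::'k)")
    case False
    then show ?thesis using A_co_nonzeroD(4)[OF p y(1) S False] by (simp add: power_add)
  qed simp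
  show ?thesis
  proof (cases "k = k'")
    case True
    have "tb_sign d' * A_co p S (sum_embed p j d) (sum_embed p j d')
        = (-1) ^ card (fst y') * ((-1) ^ card S * (A_co p S y y' :: 'k))"
      using split A_co_lift[OF p y S, of k', where 'k = 'k] True e by (simp add: tb_sign_def)
    also have "\<dots> = (-1) ^ card (fst y) * A_co p S y y'" using sign by (simp only: mult.assoc)
    finally show ?thesis using True e by (simp add: tb_sign_def)
  next
    case False
    then show ?thesis using split A_co_lift_eq_0[OF p y S False] e by (simp add: tb_sign_def)
  qed
qed

lemma wt_taubar2:
  assumes "finite (fst m)" "2 \<in> fst m"
  shows "wt p m = p ^ 2 + wt p (fst m - {2}, snd m)"
  using assms by (simp add: wt_def sum.remove)

text \<open>A coaction term tau_S (x) taubar_2 W with W a lift can only come from a monomial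
  taubar_2 m with m of the same weight as W, which is then itself in the image of \<open>sum_embed\<close>.\<close>

lemma A_co_sum_embed_eq_0:
  assumes p: "2 \<le> p" and j: "1 \<le> j" and i: "i < p" and S: "S \<subseteq> {0,1,2}"
    and b: "b \<in> Q_basis p j" and nb: "b \<notin> sum_embed p j ` dsum_basis p j i" and d: "d \<in> dsum_basis p j i"
  shows "A_co p S b (sum_embed p j d) = (0::'k::field)"
proof (rule ccontr)
  assume nz: "A_co p S b (sum_embed p j d) \<noteq> (0::'k)"
  have p0: "0 < p" using p by simp
  have bA: "b \<in> A_basis" using b by (simp add: Q_basis_def)
  have b2: "2 \<in> fst b" using A_co_taubar2_eq_0[OF p0 bA _ S sum_embed_tb2(1)[OF d]] nz by auto
  let ?W = "lift p (p * (j - 1)) (fst d) (snd d)"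
  have y: "snd d \<in> A_basis" "wt p (snd d) \<le> p * (j - 1)" using d by (auto simp: dsum_basis_def ell_basis_def)
  have "sum_embed p j d = (insert 2 (fst ?W), snd ?W)" by (simp add: sum_embed_def case_prod_beta)
  then have "A_co p S (fst b - {2}, snd b) ?W \<noteq> (0::'k)"
    using A_co_taubar2[OF p0 bA b2 S lift_indices_ge3[OF y], where 'k = 'k] nz by simp
  note co = A_co_nonzeroD[OF p0 _ S this]
  have "(fst b - {2}, snd b) \<in> A_basis" using A_basisD[OF bA] by (auto simp: A_basis_def)
  then have "wt p ?W = wt p (fst b - {2}, snd b)"
    using co(2,5) sum_embed_tb2(2)[OF d] by (simp add: le_antisym)
  then have "wt p b = wt p (sum_embed p j d)"
    using wt_taubar2[OF A_basisD(1)[OF bA] b2] wt_taubar2[OF A_basisD(1)[OF sum_embed_in_A_basis[OF d]]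
      sum_embed_tb2(1)[OF d]] sum_embed_tb2(3)[OF d] by simp
  then have "b \<notin> ell_basis p (p * j + i)"
    using sum_embed_in_Q_basis[OF p j d] sum_embed_in_A_basis[OF d] by (simp add: ell_basis_def bA)
  then show False using nb b image_sum_embed[OF p j i] by blast
qed

section \<open>The three comodule maps\<close>

lemma comod_map_tensor_embed:
  assumes p: "2 \<le> p" and i: "i < p"
  shows "comod_map (susp (qq p * int p * int j) (tensor p (ell p j :: (amon, 'k::field) bcomod) (ell p i)))
           (ell p (p * j + i)) (vec_push (tensor_embed p j) (ell_basis p j \<times> ell_basis p i))"
proof -
  let ?M = "susp (qq p * int p * int j) (tensor p (ell p j :: (amon, 'k) bcomod) (ell p i))"
  let ?B = "ell_basis p j \<times> ell_basis p i"
  have "comod_map ?M (ell p (p * j + i)) (vec_push (tensor_embed p j) (basis ?M))"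
  proof (rule comod_map_vec_push)
    show "inj_on (tensor_embed p j) (basis ?M)" using inj_on_tensor_embed[OF p i] by simp
    show "tensor_embed p j ` basis ?M \<subseteq> basis (ell p (p * j + i))" using image_tensor_embed[OF p i] by auto
    show "bdeg (ell p (p * j + i)) (tensor_embed p j b) = bdeg ?M b" if "b \<in> basis ?M" for b
      using that A_deg_tensor_embed[OF p i] by auto
    fix S :: "nat set" and b c assume S: "S \<subseteq> {0,1,2}" and b: "b \<in> basis ?M"
    show "bco (ell p (p * j + i)) S (tensor_embed p j b) c = (if c \<in> tensor_embed p j ` basis ?M
        then bco ?M S b (inv_into (basis ?M) (tensor_embed p j) c) else 0)"
    proof (cases "c \<in> tensor_embed p j ` ?B")
      case True
      then obtain b' where b': "b' \<in> ?B" "c = tensor_embed p j b'" by blast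
      then have "inv_into ?B (tensor_embed p j) c = b'" using inv_into_f_f[OF inj_on_tensor_embed[OF p i]] by simp
      then show ?thesis using A_co_tensor_embed[OF p i S _ b'(1)] b b' by simp
    qed (use A_co_tensor_embed_eq_0[OF p S] b in simp)
  qed
  then show ?thesis by simp
qed

lemma comod_map_restrict_Q_basis:
  assumes p: "0 < p" and r: "r + 1 = p * j"
  shows "comod_map (ell p (p * j + i) :: (amon, 'k::field) bcomod) (Qquot p r) (vec_restrict (Q_basis p j))"
proof -
  have "comod_map (ell p (p * j + i) :: (amon, 'k) bcomod) (Qquot p r)
           (vec_pull id (basis (Qquot p r :: (amon, 'k) bcomod)) (\<lambda>_. 1))"
  proof (rule comod_map_vec_pull)
    fix S :: "nat set" and b d assume S: "S \<subseteq> {0,1,2}" and b: "b \<in> basis (ell p (p * j + i))"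
      and d: "d \<in> basis (Qquot p r :: (amon, 'k) bcomod)"
    have dQ: "d \<in> Q_basis p j" using d by (simp add: basis_Qquot[OF r])
    have "A_co p S b d = (0::'k)" if "b \<notin> Q_basis p j"
      using A_co_nonzero_Q_basis[OF p S ell_basisD(1) dQ, of b] b that by auto
    then show "1 * bco (ell p (p * j + i)) S b (id d) = (if b \<in> id ` basis (Qquot p r)
        then 1 * bco (Qquot p r) S (inv_into (basis (Qquot p r)) id b) d else (0::'k))"
      using dQ inv_into_f_f[OF inj_on_id, of b "Q_basis p j"] by (simp add: basis_Qquot[OF r] bco_Qquot[OF r])
  qed (simp_all add: basis_Qquot[OF r] bco_Qquot[OF r])
  then show ?thesis by (simp add: basis_Qquot[OF r])
qed

lemma comod_map_sum_embed:
  assumes p: "2 \<le> p" and j: "1 \<le> j" and i: "i < p" and r: "r + 1 = p * j"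
  shows "comod_map (Qquot p r :: (amon, 'k::field) bcomod)
           (dsum_susp {i + 1..p - 1} (phi p j) (ell p (j - 1)))
           (vec_pull (sum_embed p j) (dsum_basis p j i) tb_sign)"
proof -
  let ?Q = "Qquot p r :: (amon, 'k) bcomod"
  let ?D = "dsum_susp {i + 1..p - 1} (phi p j) (ell p (j - 1) :: (amon, 'k) bcomod)"
  have p0: "0 < p" using p by simp
  have bD: "basis ?D = dsum_basis p j i" by (simp add: dsum_basis_def)
  have "comod_map ?Q ?D (vec_pull (sum_embed p j) (basis ?D) tb_sign)"
  proof (rule comod_map_vec_pull)
    show "inj_on (sum_embed p j) (basis ?D)" using inj_on_sum_embed bD by simp
    show "bdeg ?Q (sum_embed p j d) = bdeg ?D d" if "d \<in> basis ?D" for d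
    proof -
      have "d \<in> dsum_basis p j i" using that bD by simp
      then show ?thesis using A_deg_sum_embed[OF p j] by (cases d) (simp add: add.commute)
    qed
    fix S :: "nat set" assume S: "S \<subseteq> {0,1,2}"
    show "tb_sign d * bco ?Q S b (sum_embed p j d) = (if b \<in> sum_embed p j ` basis ?D
        then tb_sign (inv_into (basis ?D) (sum_embed p j) b) * bco ?D S (inv_into (basis ?D) (sum_embed p j) b) d
        else 0)" if b: "b \<in> basis ?Q" and d: "d \<in> basis ?D" for b d
    proof -
      have d': "d \<in> dsum_basis p j i" using d bD by simp
      have co: "bco ?Q S b (sum_embed p j d) = A_co p S b (sum_embed p j d)"
        using sum_embed_in_Q_basis[OF p j d'] by (simp add: bco_Qquot[OF r])
      show ?thesis
      proof (cases "b \<in> sum_embed p j ` dsum_basis p j i")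
        case True
        then obtain d2 where d2: "d2 \<in> dsum_basis p j i" "b = sum_embed p j d2" by blast
        then have "inv_into (dsum_basis p j i) (sum_embed p j) b = d2" by (simp add: inv_into_f_f[OF inj_on_sum_embed])
        then show ?thesis
          using A_co_sum_embed[OF p0 S d2(1) d'] co d2 bD by (cases d2, cases d) auto
      next
        case False
        then show ?thesis
          using A_co_sum_embed_eq_0[OF p j i S _ False d', where 'k = 'k] co b bD by (simp add: basis_Qquot[OF r])
      qed
    qed
    show "bco ?D S d' d = 0" if d': "d' \<in> basis ?D" and d: "d \<notin> basis ?D" for d' d
    proof -
      obtain k' y' k c where e: "d' = (k', y')" "d = (k, c)" by (cases d', cases d)
      then have "A_co p S y' c = (0::'k)" if "k = k'"
        using A_co_nonzero_ell_basis[OF p0 S, of y' "j - 1" c] d' d that by auto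
      then show ?thesis using e by auto
    qed
  qed
  then show ?thesis unfolding bD .
qed

theorem mainTheorem17:
  fixes p j i :: nat
  assumes "prime p" and "odd p" and "card (UNIV :: 'k set) = p"
    and "1 \<le> j" and "i < p"
  shows "\<exists>f g h. exact4
           (susp (qq p * int p * int j) (tensor p (ell p j :: (amon, 'k::{field,finite}) bcomod) (ell p i)))
           (ell p (p * j + i))
           (Qquot p (p * j - 1))
           (dsum_susp {i + 1..p - 1} (phi p j) (ell p (j - 1) :: (amon, 'k) bcomod))
           f g h"
proof -
  have p: "2 \<le> p" using assms(1) by (simp add: prime_ge_2_nat)
  note j = assms(4) and i = assms(5)
  have r: "p * j - 1 + 1 = p * j" using p j by (simp add: Suc_le_eq)
  let ?M1 = "susp (qq p * int p * int j) (tensor p (ell p j :: (amon, 'k) bcomod) (ell p i))"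
  let ?M2 = "ell p (p * j + i) :: (amon, 'k) bcomod"
  let ?M3 = "Qquot p (p * j - 1) :: (amon, 'k) bcomod"
  let ?M4 = "dsum_susp {i + 1..p - 1} (phi p j) (ell p (j - 1) :: (amon, 'k) bcomod)"
  have B: "basis ?M1 = ell_basis p j \<times> ell_basis p i" "basis ?M2 = ell_basis p (p * j + i)"
    "basis ?M3 = Q_basis p j" "basis ?M4 = dsum_basis p j i"
    by (simp_all only: basis_Qquot[OF r]) (simp_all add: dsum_basis_def)
  have "exact4 ?M1 ?M2 ?M3 ?M4 (vec_push (tensor_embed p j) (basis ?M1)) (vec_restrict (basis ?M3))
      (vec_pull (sum_embed p j) (basis ?M4) tb_sign)"
  proof (rule exact4_vec_push_restrict_pull, unfold B)
    show "comod_map ?M1 ?M2 (vec_push (tensor_embed p j) (ell_basis p j \<times> ell_basis p i))"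
      by (rule comod_map_tensor_embed[OF p i])
    show "comod_map ?M2 ?M3 (vec_restrict (Q_basis p j))"
      by (rule comod_map_restrict_Q_basis[OF _ r]) (use p in simp)
    show "comod_map ?M3 ?M4 (vec_pull (sum_embed p j) (dsum_basis p j i) tb_sign)"
      by (rule comod_map_sum_embed[OF p j i r])
  qed (use inj_on_tensor_embed[OF p i] image_tensor_embed[OF p i] inj_on_sum_embed
      image_sum_embed[OF p j i] in \<open>simp_all add: tb_sign_def\<close>)
  then show ?thesis by blast
qed

end
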